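(* Let $(C,\mathfrak p,\mathfrak d)$ be a regular $q$-cycle coalgebra with $\mathfrak p_{11}^1\ne 0$. Then $(C,\mathfrak p,\mathfrak d)$ is equivalent, via a map $f_\lambda$ ($\lambda\in K^\times$), to a unique standard cycle coalgebra of degree $v_0=1$.
   Context: $K$ is an algebraically closed field of characteristic $0$ and $n\ge2$. $C$ is the coalgebra dual to $K[y]/\langle y^n\rangle$: basis $x_0,\dots,x_{n-1}$, $\Delta(x_i)=\sum_{j+k=i}x_j\otimes x_k$, $\epsilon(x_i)=\delta_{i0}$; $C\otimes C$ has the tensor product coalgebra structure; Sweedler notation $\Delta(b)=b_{(1)}\otimes b_{(2)}$. For linear maps $\mathfrak p,\mathfrak d\colon C\otimes C\to C$ write $a\cdot b=\mathfrak p(a\otimes b)$, $a:b=\mathfrak d(a\otimes b)$, $\mathfrak p(x_i\otimes x_j)=\sum_{k=0}^{n-1}\mathfrak p_{ij}^kx_k$, $\mathfrak d(x_i\otimes x_j)=\sum_{k=0}^{n-1}\mathfrak d_{ij}^kx_k$. A triple $(C,\mathfrak p,\mathfrak d)$ with $\mathfrak p,\mathfrak d$ coalgebra morphisms is a regular $q$-magma coalgebra if there are coalgebra morphisms $a\otimes b\mapsto a^b$, $a\otimes b\mapsto a_b$ from $C\otimes C$ to $C$ with $a^{b_{(1)}}\cdot b_{(2)}=(a\cdot b_{(1)})^{b_{(2)}}=\epsilon(b)a$ and $(a:b_{(2)})_{b_{(1)}}=a_{b_{(2)}}:b_{(1)}=\epsilon(b)a$. It is a regular $q$-cycle coalgebra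 if moreover for all $a,b,c$: (1) $(a\cdot b_{(1)})\cdot(c:b_{(2)})=(a\cdot c_{(2)})\cdot(b\cdot c_{(1)})$; (2) $(a\cdot b_{(1)}):(c\cdot b_{(2)})=(a:c_{(2)})\cdot(b:c_{(1)})$; (3) $(a:b_{(1)}):(c:b_{(2)})=(a:c_{(2)}):(b\cdot c_{(1)})$. A cycle coalgebra is $(C,\mathfrak p)$ with $(C,\mathfrak p,\mathfrak p)$ a regular $q$-cycle coalgebra. Equivalence: for $\lambda\in K^\times$ set $\bar{\mathfrak p}_{ij}^k=\lambda^{k-i-j}\mathfrak p_{ij}^k$, $\bar{\mathfrak d}_{ij}^k=\lambda^{k-i-j}\mathfrak d_{ij}^k$; then the coalgebra automorphism $f_\lambda(x_i)=\lambda^ix_i$ is an isomorphism of $q$-magma coalgebras from $(C,\mathfrak p,\mathfrak d)$ to $(C,\bar{\mathfrak p},\bar{\mathfrak d})$, and $(C,\mathfrak p,\mathfrak d)$ is said to be equivalent via $f_\lambda$ to $(C,\bar{\mathfrak p},\bar{\mathfrak d})$. Standard cycle coalgebras: for $1\le v_0<n$ and $f=1+x^{v_0}+\sum_{v=v_0+1}^{n-1}p_vx^v\in K[x]$, put $g=f(f^{v_0}-1)/f'\in K[[x]]$, let $G=\sum_{v\ge0}g_v(x)y^v\in K[[x]][[y]]$ be the unique series with $g_0=x$ and $G_y=g(x)f'(y)G_x-(f(y)-1)G_y$, set $\mathfrak p_{uv}^0=\delta_{0,u+v}$, $\mathfrak p_{uv}^1=$ coefficient of $x^uy^v$ in $G$,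 and $\mathfrak p_{uv}^w=\sum_{u_1+u_2=u,\,v_1+v_2=v}\mathfrak p^1_{u_1v_1}\mathfrak p^{w-1}_{u_2v_2}$ for $w>1$. The map $\mathfrak p$ with these structure constants ($0\le u,v,w\le n-1$) makes $(C,\mathfrak p)$ a cycle coalgebra, called the standard cycle coalgebra $\mathrm{SCC}(f)$ associated with $f$; its degree is $v_0$. *)

theory Defs
  imports "HOL-Computational_Algebra.Computational_Algebra"
begin

text \<open>
  The coalgebra C has basis x_0,...,x_{n-1}.  A linear map
  m : C \<otimes> C \<rightarrow> C is encoded by its structure constants
  m i j k = coefficient of x_k in m(x_i \<otimes> x_j)  (only indices < n matter).
  All Sweedler-notation identities are linear in the arguments, hence it is
  equivalent to check them on basis elements; we write them out on basis
  elements, using \<Delta>(x_j) = \<Sum>_{j1+j2=j} x_{j1} \<otimes> x_{j2}.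
\<close>

type_synonym 'a sconst = "nat \<Rightarrow> nat \<Rightarrow> nat \<Rightarrow> 'a"

definition mv :: "'a sconst \<Rightarrow> nat \<Rightarrow> nat \<Rightarrow> nat \<Rightarrow> 'a" where
  "mv m i j = (\<lambda>k. m i j k)"

definition ap2 :: "nat \<Rightarrow> 'a::comm_ring_1 sconst \<Rightarrow> (nat \<Rightarrow> 'a) \<Rightarrow> (nat \<Rightarrow> 'a) \<Rightarrow> nat \<Rightarrow> 'a" where
  "ap2 n m F G l = (\<Sum>k<n. \<Sum>k'<n. F k * G k' * m k k' l)"

text \<open>m : C \<otimes> C \<rightarrow> C is a coalgebra morphism (C \<otimes> C with tensor product coalgebra
  structure): compatibility with counits and comultiplications.\<close>
definition coalg_morph :: "nat \<Rightarrow> 'a::comm_ring_1 sconst \<Rightarrow> bool" where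
  "coalg_morph n m \<longleftrightarrow>
     (\<forall>i<n. \<forall>j<n. m i j 0 = (if i = 0 \<and> j = 0 then 1 else 0)) \<and>
     (\<forall>i<n. \<forall>j<n. \<forall>k1<n. \<forall>k2<n.
        (if k1 + k2 < n then m i j (k1 + k2) else 0) =
        (\<Sum>i1\<le>i. \<Sum>j1\<le>j. m i1 j1 k1 * m (i - i1) (j - j1) k2))"

definition kd :: "nat \<Rightarrow> nat \<Rightarrow> 'a::comm_ring_1" where
  "kd a b = (if a = b then 1 else 0)"

definition regular_q_magma :: "nat \<Rightarrow> 'a::comm_ring_1 sconst \<Rightarrow> 'a sconst \<Rightarrow> bool" where
  "regular_q_magma n p d \<longleftrightarrow> coalg_morph n p \<and> coalg_morph n d \<and>
    (\<exists>u l. coalg_morph n u \<and> coalg_morph n l \<and>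
      (\<forall>i<n. \<forall>j<n. \<forall>r<n.
         \<comment> \<open>a^{b_(1)} \<cdot> b_(2) = \<epsilon>(b) a\<close>
         (\<Sum>j1\<le>j. ap2 n p (mv u i j1) (\<lambda>k. kd k (j - j1)) r) = kd j 0 * kd i r \<and>
         \<comment> \<open>(a \<cdot> b_(1))^{b_(2)} = \<epsilon>(b) a\<close>
         (\<Sum>j1\<le>j. ap2 n u (mv p i j1) (\<lambda>k. kd k (j - j1)) r) = kd j 0 * kd i r \<and>
         \<comment> \<open>(a : b_(2))_{b_(1)} = \<epsilon>(b) a\<close>
         (\<Sum>j1\<le>j. ap2 n l (mv d i (j - j1)) (\<lambda>k. kd k j1) r) = kd j 0 * kd i r \<and>
         \<comment> \<open>a_{b_(2)} : b_(1) = \<epsilon>(b) a\<close>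
         (\<Sum>j1\<le>j. ap2 n d (mv l i (j - j1)) (\<lambda>k. kd k j1) r) = kd j 0 * kd i r))"

text \<open>(C,p,d) is a regular q-cycle coalgebra; a = x_i, b = x_j, c = x_h\<close>
definition regular_q_cycle :: "nat \<Rightarrow> 'a::comm_ring_1 sconst \<Rightarrow> 'a sconst \<Rightarrow> bool" where
  "regular_q_cycle n p d \<longleftrightarrow> regular_q_magma n p d \<and>
    (\<forall>i<n. \<forall>j<n. \<forall>h<n. \<forall>r<n.
      \<comment> \<open>(1) (a\<cdot>b_(1))\<cdot>(c:b_(2)) = (a\<cdot>c_(2))\<cdot>(b\<cdot>c_(1))\<close>
      (\<Sum>j1\<le>j. ap2 n p (mv p i j1) (mv d h (j - j1)) r) =
      (\<Sum>h1\<le>h. ap2 n p (mv p i (h - h1)) (mv p j h1) r) \<and>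
      \<comment> \<open>(2) (a\<cdot>b_(1)):(c\<cdot>b_(2)) = (a:c_(2))\<cdot>(b:c_(1))\<close>
      (\<Sum>j1\<le>j. ap2 n d (mv p i j1) (mv p h (j - j1)) r) =
      (\<Sum>h1\<le>h. ap2 n p (mv d i (h - h1)) (mv d j h1) r) \<and>
      \<comment> \<open>(3) (a:b_(1)):(c:b_(2)) = (a:c_(2)):(b\<cdot>c_(1))\<close>
      (\<Sum>j1\<le>j. ap2 n d (mv d i j1) (mv d h (j - j1)) r) =
      (\<Sum>h1\<le>h. ap2 n d (mv d i (h - h1)) (mv p j h1) r))"

definition equiv_via :: "nat \<Rightarrow> 'a::field sconst \<Rightarrow> 'a sconst \<Rightarrow> 'a \<Rightarrow> 'a sconst \<Rightarrow> 'a sconst \<Rightarrow> bool" where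
  "equiv_via n p d lam P D \<longleftrightarrow> lam \<noteq> 0 \<and>
     (\<forall>i<n. \<forall>j<n. \<forall>k<n.
        P i j k = lam powi (int k - int i - int j) * p i j k \<and>
        D i j k = lam powi (int k - int i - int j) * d i j k)"

definition scc_f :: "nat \<Rightarrow> nat \<Rightarrow> (nat \<Rightarrow> 'a::field) \<Rightarrow> 'a fps" where
  "scc_f n v0 ps = 1 + fps_X ^ v0 + (\<Sum>v\<in>{v0+1..<n}. fps_const (ps v) * fps_X ^ v)"

definition scc_g :: "nat \<Rightarrow> nat \<Rightarrow> (nat \<Rightarrow> 'a::field) \<Rightarrow> 'a fps" where
  "scc_g n v0 ps = scc_f n v0 ps * (scc_f n v0 ps ^ v0 - 1) / fps_deriv (scc_f n v0 ps)"

text \<open>Elements of K[[x]][[y]] are 'a fps fps: outer variable y, inner variable x.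
  lift F is F(y) (a series in y with constant coefficients).\<close>
definition lift_y :: "'a::comm_ring_1 fps \<Rightarrow> 'a fps fps" where
  "lift_y F = Abs_fps (\<lambda>v. fps_const (F $ v))"

definition deriv_x :: "'a::comm_ring_1 fps fps \<Rightarrow> 'a fps fps" where
  "deriv_x G = Abs_fps (\<lambda>v. fps_deriv (G $ v))"

definition scc_G :: "nat \<Rightarrow> nat \<Rightarrow> (nat \<Rightarrow> 'a::field) \<Rightarrow> 'a fps fps" where
  "scc_G n v0 ps = (THE G. G $ 0 = fps_X \<and>
      fps_deriv G = fps_const (scc_g n v0 ps) * lift_y (fps_deriv (scc_f n v0 ps)) * deriv_x G
                    - (lift_y (scc_f n v0 ps) - 1) * fps_deriv G)"

text \<open>p^1_{uv} = coefficient of x^u y^v in G\<close>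
definition scc1 :: "nat \<Rightarrow> nat \<Rightarrow> (nat \<Rightarrow> 'a::field) \<Rightarrow> nat \<Rightarrow> nat \<Rightarrow> 'a" where
  "scc1 n v0 ps u v = (scc_G n v0 ps $ v) $ u"

fun scc_aux :: "nat \<Rightarrow> nat \<Rightarrow> (nat \<Rightarrow> 'a::field) \<Rightarrow> nat \<Rightarrow> nat \<Rightarrow> nat \<Rightarrow> 'a" where
  "scc_aux n v0 ps 0 u v = (if u + v = 0 then 1 else 0)"
| "scc_aux n v0 ps (Suc w) u v =
     (if w = 0 then scc1 n v0 ps u v
      else (\<Sum>u1\<le>u. \<Sum>v1\<le>v. scc1 n v0 ps u1 v1 * scc_aux n v0 ps w (u - u1) (v - v1)))"

text \<open>structure constants of SCC(f): scc n v0 ps u v w = p^w_{uv}\<close>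
definition scc :: "nat \<Rightarrow> nat \<Rightarrow> (nat \<Rightarrow> 'a::field) \<Rightarrow> 'a sconst" where
  "scc n v0 ps u v w = scc_aux n v0 ps w u v"

end

(*
  A coalgebra morphism m : C (x) C -> C is determined by the series P(x, y) = sum m^1_ij x^i y^j
  of its degree-one structure constants: m^k_ij is the coefficient of x^i y^j in P^k. Since
  regularity makes the coefficient of x in P nonzero, P^n = 0 modulo (x^n, y^n) forces x to
  divide P. In degree one the cycle axioms become identities between coefficients of composed
  series. They give P(x, 0) = x = D(x, 0), then a Riccati equation showing that the coefficients
  f(y) of x in P and in D agree, and finally the first-order PDE g(y) Q_y + g(x) Q_x = f(y) g(Q)
  for both Q = P and Q = D, whose solution is unique; hence d = p. The series G of the standard
  cycle coalgebra SCC(f) satisfies the same PDE, so after rescaling by lambda = p^1_11, which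
  normalises p^1_11 to 1, the coalgebra is SCC(f). Conversely p^1_11 = 1 in every SCC(f), which
  forces lambda = p^1_11 and gives uniqueness.
*)

theory Submission
  imports Defs
begin

declare One_nat_def [simp del]

section \<open>Univariate power series\<close>

lemma sum_atMost_1: "(\<Sum>j\<le>1. f j) = f 0 + f 1" for f :: "nat \<Rightarrow> 'a::comm_monoid_add"
  by (simp add: One_nat_def atMost_Suc add.commute)

lemma fps_deriv_mult_nth_1: "b $ 0 = 0 \<Longrightarrow> (fps_deriv A * b) $ 1 = A $ 1 * (b $ 1 :: 'a::comm_ring_1)"
  by (simp add: fps_mult_nth atLeast0AtMost sum_atMost_1 One_nat_def)

lemma fps_deriv_mult_nth_diff:
  fixes A B g :: "'a::comm_ring_1 fps"
  assumes "\<And>m. m < h \<Longrightarrow> A $ m = B $ m" "g $ 0 = 0" "1 \<le> h"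
  shows "(fps_deriv A * g) $ h - (fps_deriv B * g) $ h = of_nat h * (A $ h - B $ h) * g $ 1"
proof -
  have "fps_deriv (A - B) $ m * g $ (h - m) = 0" if "m \<le> h" "m \<noteq> h - 1" for m
    using that assms by (cases "m = h") (auto simp: fps_deriv_nth)
  then have "(fps_deriv (A - B) * g) $ h = (\<Sum>m\<in>{h - 1}. fps_deriv (A - B) $ m * g $ (h - m))"
    unfolding fps_mult_nth by (intro sum.mono_neutral_right) auto
  then show ?thesis
    using assms(3) by (simp add: algebra_simps fps_deriv_nth)
qed

lemma fps_power_nth_below_order:
  fixes A :: "'a::comm_ring_1 fps"
  assumes "\<And>i. i < v \<Longrightarrow> A $ i = 0" "1 \<le> v" "2 \<le> k" "b \<le> v"
  shows "(A ^ k) $ b = 0"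
proof (cases "A = 0")
  case False
  have "v \<le> subdegree A"
    by (rule subdegree_geI[OF False]) (rule assms(1))
  then have "2 * v \<le> k * subdegree A"
    using mult_le_mono[OF assms(3)] by blast
  then have "b < k * subdegree A"
    using assms(2,4) by linarith
  then show ?thesis by (rule fps_pow_nth_below_subdegree)
qed (use assms(3) in \<open>simp add: power_0_left\<close>)

lemma fps_power_nth_near_X:
  fixes \<phi> :: "'a::comm_ring_1 fps"
  assumes "\<phi> $ 0 = 0" "\<And>t. t < j \<Longrightarrow> \<phi> $ t = (if t = 1 then 1 else 0)" "2 \<le> j"
  shows "2 \<le> k \<Longrightarrow> m \<le> j \<Longrightarrow> (\<phi> ^ k) $ m = (if m = k then 1 else 0)"
proof (induction k arbitrary: m rule: less_induct)
  case (less k)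
  obtain k' where k': "k = Suc k'" "1 \<le> k'" using less.prems by (cases k) auto
  have "\<phi> $ t * (\<phi> ^ k') $ (m - t) = 0" if "t \<le> m" "t \<noteq> 1" for t
  proof (cases "t < j")
    case True
    then show ?thesis using assms(2) that by simp
  next
    case False
    then have "m - t = 0" using that less.prems by simp
    then show ?thesis using startsby_zero_power[OF assms(1), of k'] k' by simp
  qed
  then have "(\<phi> ^ Suc k') $ m = (\<Sum>t\<in>(if m = 0 then {} else {1}). \<phi> $ t * (\<phi> ^ k') $ (m - t))"
    unfolding power_Suc fps_mult_nth by (intro sum.mono_neutral_right) auto
  also have "\<dots> = (if m = 0 then 0 else (\<phi> ^ k') $ (m - 1))"
    using assms(2)[of 1] assms(3) by simp
  also have "\<dots> = (if m = k then 1 else 0)"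
  proof (cases "k' = 1")
    case True
    then show ?thesis using k' less.prems assms(2)[of "m - 1"] by auto
  next
    case False
    then show ?thesis using less.IH[of k' "m - 1"] k' less.prems by auto
  qed
  finally show ?case using k' by simp
qed

text \<open>If \<open>f \<circ> \<phi> \<equiv> f\<close> modulo \<open>x\<^sup>n\<close>, where \<open>\<phi>(0) = 0\<close> and \<open>f\<close> has a nonzero linear term, then
  \<open>\<phi> \<equiv> x\<close> modulo \<open>x\<^sup>n\<close>: at the first index \<open>j\<close> where \<open>\<phi>\<close> differs from \<open>x\<close>, the coefficient of
  \<open>x\<^sup>j\<close> in \<open>f \<circ> \<phi>\<close> is \<open>f\<^sub>j + f\<^sub>1 \<phi>\<^sub>j\<close>.\<close>

lemma compose_eq_self_imp_X:
  fixes \<phi> :: "'a::idom fps" and f :: "nat \<Rightarrow> 'a"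
  assumes comp: "\<And>j. j < n \<Longrightarrow> f j = (\<Sum>k<n. f k * (\<phi> ^ k) $ j)"
    and "\<phi> $ 0 = 0" "f 1 \<noteq> 0" "2 \<le> n"
  shows "j < n \<Longrightarrow> \<phi> $ j = (if j = 1 then 1 else 0)"
proof (induction j rule: less_induct)
  case (less j)
  consider "j = 0" | "j = 1" | "2 \<le> j" by linarith
  then show ?case
  proof cases
    case 1
    then show ?thesis using assms(2) by simp
  next
    case 2
    have "f k * (\<phi> ^ k) $ 1 = (if k = 1 then f 1 * \<phi> $ 1 else 0)" for k
      using startsby_zero_power_prefix[OF assms(2), rule_format, of 1 k]
      by (cases "k \<le> 1") (auto simp: le_Suc_eq One_nat_def)
    then have "f 1 = f 1 * \<phi> $ 1" using comp[of 1] assms(4) by simp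
    then show ?thesis using 2 assms(3) by simp
  next
    case 3
    have below: "\<And>t. t < j \<Longrightarrow> \<phi> $ t = (if t = 1 then 1 else 0)" using less by auto
    have "f k * (\<phi> ^ k) $ j = (if k = 1 then f 1 * \<phi> $ j else 0) + (if k = j then f j else 0)" for k
    proof (cases "2 \<le> k")
      case True
      then show ?thesis using fps_power_nth_near_X[OF assms(2) below 3 True, of j] 3 by auto
    next
      case False
      then have "k = 0 \<or> k = 1" by auto
      then show ?thesis using 3 by auto
    qed
    then have "f j = f 1 * \<phi> $ j + f j"
      using comp[of j] less.prems assms(4) by (simp add: sum.distrib)
    then show ?thesis using 3 assms(3) by simp
  qed
qed

lemma fps_cutoff_mult_cong:
  assumes "fps_cutoff n A = fps_cutoff n A'" "fps_cutoff n B = fps_cutoff n B'"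
  shows "fps_cutoff n (A * B) = fps_cutoff n (A' * B')"
  using assms unfolding fps_cutoff_eq_fps_cutoff_iff by (auto simp: fps_mult_nth intro!: sum.cong)

lemma fps_cutoff_mult_cancel:
  fixes A B B' :: "'a::field fps"
  assumes "A $ 0 \<noteq> 0" "fps_cutoff n (A * B) = fps_cutoff n (A * B')"
  shows "fps_cutoff n B = fps_cutoff n B'"
proof -
  have "fps_cutoff n (inverse A * (A * B)) = fps_cutoff n (inverse A * (A * B'))"
    by (rule fps_cutoff_mult_cong[OF refl assms(2)])
  then show ?thesis
    using assms(1) by (simp add: mult.assoc[symmetric] inverse_mult_eq_1)
qed

lemma fps_cutoff_Suc_X_mult:
  "fps_cutoff (Suc n) (fps_X * A) = fps_X * fps_cutoff n (A :: 'a::comm_ring_1 fps)"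
  by (intro fps_ext) (auto simp: fps_X_mult_nth)

text \<open>For two solutions \<open>f\<close>, \<open>e\<close> of the Riccati-type equations below, the Wronskian
  \<open>W = e' f - f' e\<close> satisfies \<open>c (f - 1) W \<equiv> 0\<close>, and \<open>f - 1\<close> has order exactly one.\<close>

lemma riccati_wronskian_cutoff_eq_0:
  fixes e f a :: "'a::field fps" and c :: 'a
  assumes f_ode: "fps_cutoff n (fps_deriv f * a) = fps_cutoff n (fps_const c * (f * f - f))"
    and e_ode: "fps_cutoff n (fps_deriv e * a) = fps_cutoff n (fps_const c * (e * f - e))"
    and "c \<noteq> 0" "f $ 0 = 1" "f $ 1 = c"
  shows "fps_cutoff (n - 1) (fps_deriv e * f - fps_deriv f * e) = 0"
proof -
  define W where "W = fps_deriv e * f - fps_deriv f * e"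
  have "fps_const c * ((f - 1) * W) =
        fps_deriv e * (fps_const c * (f * f - f)) - fps_deriv f * (fps_const c * (e * f - e))"
    by (simp add: W_def algebra_simps)
  moreover have "fps_cutoff n (fps_deriv e * (fps_const c * (f * f - f))) =
                 fps_cutoff n (fps_deriv e * (fps_deriv f * a))"
    by (rule fps_cutoff_mult_cong[OF refl f_ode[symmetric]])
  moreover have "fps_cutoff n (fps_deriv f * (fps_const c * (e * f - e))) =
                 fps_cutoff n (fps_deriv f * (fps_deriv e * a))"
    by (rule fps_cutoff_mult_cong[OF refl e_ode[symmetric]])
  ultimately have "fps_cutoff n (fps_const c * ((f - 1) * W)) = fps_cutoff n (fps_const c * 0)"
    by (simp add: fps_cutoff_diff mult.left_commute[of "fps_deriv e"])
  then have fW: "fps_cutoff n ((f - 1) * W) = fps_cutoff n 0"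
    by (rule fps_cutoff_mult_cancel[rotated]) (simp add: assms(3))
  define U where "U = fps_shift 1 (f - 1)"
  have "f - 1 = fps_X * U"
    by (intro fps_ext) (simp add: U_def fps_X_mult_nth assms(4))
  then have "fps_cutoff (n - 1) (U * W) = fps_cutoff (n - 1) (U * 0)"
    using fW fps_cutoff_Suc_X_mult[of "n - 1" "U * W"] by (cases n) (simp_all add: mult.assoc)
  then have "fps_cutoff (n - 1) W = fps_cutoff (n - 1) 0"
    by (rule fps_cutoff_mult_cancel[rotated]) (use assms(3,5) in \<open>simp add: U_def One_nat_def\<close>)
  then show ?thesis by (simp add: W_def)
qed

text \<open>A vanishing Wronskian makes \<open>(e / f)' = W / f\<^sup>2\<close> vanish.\<close>

lemma fps_cutoff_eq_if_wronskian:
  fixes e f :: "'a::field_char_0 fps"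
  assumes W: "fps_cutoff (n - 1) (fps_deriv e * f - fps_deriv f * e) = 0"
    and "f $ 0 \<noteq> 0" "e $ 0 = f $ 0"
  shows "fps_cutoff n e = fps_cutoff n f"
proof -
  define q where "q = e * inverse f"
  have fi: "f * inverse f = 1"
    using assms(2) by (simp add: inverse_mult_eq_1')
  have "(fps_deriv e * f - fps_deriv f * e) * inverse f ^ 2 =
        fps_deriv e * (f * inverse f) * inverse f - fps_deriv f * e * inverse f ^ 2"
    by (simp add: power2_eq_square algebra_simps)
  also have "\<dots> = fps_deriv q"
    using assms(2) by (simp add: fi q_def fps_inverse_deriv algebra_simps)
  finally have deriv_q: "(fps_deriv e * f - fps_deriv f * e) * inverse f ^ 2 = fps_deriv q" .
  have "fps_cutoff (n - 1) (fps_deriv e * f - fps_deriv f * e) = fps_cutoff (n - 1) 0"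
    using W by simp
  from fps_cutoff_mult_cong[OF this refl, of "inverse f ^ 2"]
  have dq: "fps_deriv q $ k = 0" if "k < n - 1" for k
    using that unfolding deriv_q fps_cutoff_eq_fps_cutoff_iff by (simp del: fps_deriv_nth)
  have "fps_cutoff n q = fps_cutoff n 1"
    unfolding fps_cutoff_eq_fps_cutoff_iff
  proof (intro allI impI)
    fix j assume j: "j < n"
    show "q $ j = 1 $ j"
    proof (cases j)
      case 0
      then show ?thesis using assms(2,3) by (simp add: q_def)
    next
      case (Suc j')
      then have "of_nat (Suc j') * q $ Suc j' = 0"
        using dq[of j'] j by (simp only: fps_deriv_nth Suc_eq_plus1)
      then show ?thesis using Suc by (simp del: of_nat_Suc)
    qed
  qed
  moreover have "q * f = e"
    using assms(2) by (simp add: q_def mult.assoc inverse_mult_eq_1)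
  ultimately show ?thesis
    using fps_cutoff_mult_cong[of n q 1 f f] by simp
qed

section \<open>Bivariate power series\<close>

text \<open>\<open>Q $ j $ i\<close> is the coefficient of \<open>x\<^sup>i y\<^sup>j\<close>: as for \<open>scc_G\<close>, the outer variable is \<open>y\<close>.\<close>

definition fps2 :: "(nat \<Rightarrow> nat \<Rightarrow> 'a) \<Rightarrow> 'a fps fps" where
  "fps2 c = Abs_fps (\<lambda>j. Abs_fps (\<lambda>i. c i j))"

definition coeff_x :: "'a fps fps \<Rightarrow> nat \<Rightarrow> 'a fps" where
  "coeff_x Q i = Abs_fps (\<lambda>j. Q $ j $ i)"

lemma fps2_nth [simp]: "fps2 c $ j $ i = c i j"
  by (simp add: fps2_def)

lemma coeff_x_nth [simp]: "coeff_x Q i $ j = Q $ j $ i"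
  by (simp add: coeff_x_def)

lemma fps2_mult_nth:
  "((A::'a::comm_ring_1 fps fps) * B) $ j $ i =
     (\<Sum>j1\<le>j. \<Sum>i1\<le>i. A $ j1 $ i1 * B $ (j - j1) $ (i - i1))"
  by (simp add: fps_mult_nth atLeast0AtMost fps_sum_nth)

lemma fps2_power_nth_local:
  fixes Q Q' :: "'a::comm_ring_1 fps fps"
  assumes "\<And>i' j'. i' \<le> i \<Longrightarrow> j' \<le> j \<Longrightarrow> Q $ j' $ i' = Q' $ j' $ i'"
  shows "(Q ^ k) $ j $ i = (Q' ^ k) $ j $ i"
  using assms
proof (induction k arbitrary: i j)
  case (Suc k)
  show ?case unfolding power_Suc fps2_mult_nth
    by (intro sum.cong refl arg_cong2[where f=times] Suc) auto
qed simp

lemma fps2_power_nth_below: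
  fixes Q :: "'a::comm_ring_1 fps fps"
  assumes "\<And>j. Q $ j $ 0 = 0" "i < k"
  shows "(Q ^ k) $ j $ i = 0"
  using assms(2)
proof (induction k arbitrary: i j)
  case (Suc k)
  have "Q $ j1 $ i1 * (Q ^ k) $ (j - j1) $ (i - i1) = 0" if "i1 \<le> i" for i1 j1
    using that Suc assms(1) by (cases "i1 = 0") auto
  then show ?case unfolding power_Suc fps2_mult_nth by (simp add: sum.neutral)
qed simp

lemma fps2_power_nth_0:
  fixes Q :: "'a::comm_ring_1 fps fps"
  assumes "\<And>j. Q $ j $ 0 = 0"
  shows "(Q ^ k) $ j $ 0 = (if k = 0 \<and> j = 0 then 1 else 0)"
  using fps2_power_nth_below[OF assms, of 0 k] by (cases k) auto

lemma fps2_power_nth_1: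
  fixes Q :: "'a::comm_ring_1 fps fps"
  assumes "\<And>j. Q $ j $ 0 = 0"
  shows "(Q ^ k) $ j $ 1 = (if k = 1 then Q $ j $ 1 else 0)"
proof (cases "k \<ge> 2")
  case True
  then show ?thesis using fps2_power_nth_below[OF assms, of 1 k] by auto
next
  case False
  then have "k = 0 \<or> k = 1" by auto
  then show ?thesis by auto
qed

lemma fps2_power_y0:
  fixes Q :: "'a::comm_ring_1 fps fps"
  assumes "Q $ 0 = fps_X"
  shows "(Q ^ k) $ 0 $ i = (if i = k then 1 else 0)"
  by (simp add: fps_power_zeroth assms)

lemma fps2_power_y1:
  fixes Q :: "'a::comm_ring_1 fps fps"
  assumes "Q $ 0 = fps_X"
  shows "(Q ^ k) $ 1 = of_nat k * fps_X ^ (k - 1) * Q $ 1"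
proof (induction k)
  case (Suc k)
  have "(Q ^ Suc k) $ 1 = fps_X * (Q ^ k) $ 1 + Q $ 1 * fps_X ^ k"
    using assms by (simp add: fps_mult_nth atLeast0AtMost atMost_Suc One_nat_def fps_power_zeroth)
  also have "\<dots> = of_nat (Suc k) * fps_X ^ k * Q $ 1"
    using Suc.IH by (cases k) (simp_all add: algebra_simps)
  finally show ?case by simp
qed simp

lemma sum_fps2_power_y1:
  fixes Q :: "'a::comm_ring_1 fps fps"
  assumes "Q $ 0 = fps_X" "h < n" "\<And>k. n \<le> k \<Longrightarrow> F k = 0"
  shows "(\<Sum>k<n. (Q ^ k) $ 1 $ h * F k) = (fps_deriv (Abs_fps F) * Q $ 1) $ h"
proof -
  have "(Q ^ k) $ 1 $ h = (if 0 < k \<and> k \<le> h + 1 then of_nat k * Q $ 1 $ (h + 1 - k) else 0)" for k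
  proof -
    have "(Q ^ k) $ 1 = fps_const (of_nat k) * (fps_X ^ (k - 1) * Q $ 1)"
      by (simp add: fps2_power_y1[OF assms(1)] mult.assoc fps_of_nat)
    then show ?thesis by (cases k) (auto simp: fps_X_power_mult_nth)
  qed
  then have "(\<Sum>k<n. (Q ^ k) $ 1 $ h * F k) =
        (\<Sum>k<n. if 0 < k \<and> k \<le> h + 1 then of_nat k * Q $ 1 $ (h + 1 - k) * F k else 0)"
    by (intro sum.cong) auto
  also have "\<dots> = (\<Sum>k\<in>{1..h+1}. of_nat k * Q $ 1 $ (h + 1 - k) * F k)"
    using assms(2,3) by (intro sum.mono_neutral_cong) auto
  also have "\<dots> = (\<Sum>m=0..h. of_nat (m + 1) * Q $ 1 $ (h - m) * F (m + 1))"
    by (rule sum.reindex_bij_witness[where i="\<lambda>m. m + 1" and j="\<lambda>k. k - 1"]) auto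
  also have "\<dots> = (fps_deriv (Abs_fps F) * Q $ 1) $ h"
    unfolding fps_mult_nth fps_deriv_nth by (simp add: mult_ac)
  finally show ?thesis .
qed

lemma fps2_power_nth_agree:
  fixes Q Q' :: "'a::comm_ring_1 fps fps"
  assumes "\<And>j. Q $ j $ 0 = 0" "\<And>j. Q' $ j $ 0 = 0"
    and agree: "\<And>a b. a < i \<Longrightarrow> b \<le> h \<Longrightarrow> Q $ b $ a = Q' $ b $ a"
    and "2 \<le> k" "b \<le> h"
  shows "(Q ^ k) $ b $ i = (Q' ^ k) $ b $ i"
proof -
  obtain k' where k': "k = Suc k'" "1 \<le> k'" using assms(4) by (cases k) auto
  have "Q $ b1 $ a1 * (Q ^ k') $ (b - b1) $ (i - a1) = Q' $ b1 $ a1 * (Q' ^ k') $ (b - b1) $ (i - a1)"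
    if "b1 \<le> b" "a1 \<le> i" for a1 b1
  proof (cases "a1 = 0 \<or> a1 = i")
    case True
    then show ?thesis
      using assms(1,2) fps2_power_nth_below[OF assms(1), of 0 k'] fps2_power_nth_below[OF assms(2), of 0 k']
        k'
      by auto
  next
    case False
    then have "(Q ^ k') $ (b - b1) $ (i - a1) = (Q' ^ k') $ (b - b1) $ (i - a1)"
      using that assms(5) by (intro fps2_power_nth_local agree) auto
    then show ?thesis using False that assms(5) agree by auto
  qed
  then show ?thesis
    unfolding k' power_Suc fps2_mult_nth by (intro sum.cong refl) auto
qed

text \<open>Write \<open>Q = a(y) + B\<close> with \<open>B(0, y) = 0\<close> and \<open>a\<close> of order \<open>v \<ge> 1\<close>. In the binomial expansion of
  \<open>Q\<^sup>n\<close>, the terms with \<open>a\<^sup>k\<close>, \<open>k \<ge> 2\<close>, have order \<open>> v\<close> in \<open>y\<close> and \<open>B\<^sup>n\<close> has order \<open>\<ge> n\<close> in \<open>x\<close>.\<close>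

lemma fps2_power_nth_pure_y_order:
  fixes Q :: "'a::comm_ring_1 fps fps"
  assumes "Q $ 0 $ 0 = 0" "\<And>j. j < v \<Longrightarrow> Q $ j $ 0 = 0" "1 \<le> v" "1 \<le> n"
  shows "(Q ^ n) $ v $ (n - 1) = of_nat n * Q $ v $ 0 * (Q $ 0 $ 1) ^ (n - 1)"
proof -
  define A :: "'a fps fps" where "A = Abs_fps (\<lambda>j. fps_const (Q $ j $ 0))"
  define B where "B = Q - A"
  have A_below: "A $ i = 0" if "i < v" for i
    using that assms(2) by (simp add: A_def)
  have A_power: "(A ^ k) $ b = 0" if "2 \<le> k" "b \<le> v" for k b
    using fps_power_nth_below_order[OF A_below assms(3) that] .
  have B_x0: "B $ i $ 0 = 0" for i by (simp add: B_def A_def)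
  have B_y0: "B $ 0 = Q $ 0" using assms(1) by (intro fps_ext) (simp add: B_def A_def)
  have "Q ^ n = (\<Sum>k\<le>n. of_nat (n choose k) * A ^ k * B ^ (n - k))"
    unfolding B_def by (subst binomial_ring[symmetric]) simp
  then have "(Q ^ n) $ v = (\<Sum>k\<le>n. (of_nat (n choose k) * A ^ k * B ^ (n - k)) $ v)"
    by (simp add: fps_sum_nth)
  also have "\<dots> = (\<Sum>k\<in>{0, 1}. (of_nat (n choose k) * A ^ k * B ^ (n - k)) $ v)"
  proof (intro sum.mono_neutral_right ballI)
    fix k assume "k \<in> {..n} - {0, 1}"
    then have "2 \<le> k" by auto
    then show "(of_nat (n choose k) * A ^ k * B ^ (n - k)) $ v = 0"
      by (auto simp: fps_mult_nth A_power fps_of_nat[symmetric] mult.assoc intro!: sum.neutral)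
  qed (use assms(4) in auto)
  also have "\<dots> = B ^ n $ v + of_nat n * (A $ v * (B ^ (n - 1)) $ 0)"
  proof -
    have "(A * B ^ (n - 1)) $ v = A $ v * (B ^ (n - 1)) $ 0"
      unfolding fps_mult_nth by (subst sum.remove[of _ v]) (auto intro!: sum.neutral simp: A_below)
    then show ?thesis by (simp add: fps_of_nat[symmetric] mult.assoc One_nat_def)
  qed
  finally have "(Q ^ n) $ v $ (n - 1) =
      (B ^ n) $ v $ (n - 1) + of_nat n * (A $ v * (Q $ 0) ^ (n - 1)) $ (n - 1)"
    by (simp add: B_y0 fps_power_zeroth)
  also have "(B ^ n) $ v $ (n - 1) = 0"
    using fps2_power_nth_below[OF B_x0, of "n - 1" n] assms(4) by simp
  also have "(A $ v * (Q $ 0) ^ (n - 1)) $ (n - 1) = Q $ v $ 0 * (Q $ 0 $ 1) ^ (n - 1)"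
    by (simp add: A_def startsby_zero_power_nth_same assms(1))
  finally show ?thesis by (simp add: mult.assoc)
qed

lemma fps2_nilpotent_imp_x0_eq_0:
  fixes Q :: "'a::{idom,ring_char_0} fps fps"
  assumes nil: "\<And>i j. i < n \<Longrightarrow> j < n \<Longrightarrow> (Q ^ n) $ j $ i = 0"
    and lin: "Q $ 0 $ 1 \<noteq> 0"
    and supp: "\<And>j. n \<le> j \<Longrightarrow> Q $ j $ 0 = 0"
    and n: "1 \<le> n"
  shows "Q $ j $ 0 = 0"
proof (rule ccontr)
  assume "Q $ j $ 0 \<noteq> 0"
  then obtain v where v: "Q $ v $ 0 \<noteq> 0" "\<And>j. j < v \<Longrightarrow> Q $ j $ 0 = 0"
    using exists_least_iff[of "\<lambda>j. Q $ j $ 0 \<noteq> 0"] by blast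
  have "(Q $ 0 $ 0) ^ n = 0"
    using nil[of 0 0] n by (simp add: fps_power_zeroth)
  then have Q00: "Q $ 0 $ 0 = 0" by simp
  then have "1 \<le> v" using v(1) by (cases v) auto
  have "v < n" using v(1) supp[of v] by (auto simp: not_less[symmetric])
  have "of_nat n * Q $ v $ 0 * (Q $ 0 $ 1) ^ (n - 1) = 0"
    using fps2_power_nth_pure_y_order[OF Q00 v(2) \<open>1 \<le> v\<close> n] nil \<open>v < n\<close> n by simp
  then show False using v(1) lin n by simp
qed

section \<open>Coalgebra morphisms and regular magmas\<close>

text \<open>A coalgebra morphism \<open>m\<close> is determined by the bivariate series of its degree-one
  structure constants: \<open>m i j k\<close> is the coefficient of \<open>x\<^sup>i y\<^sup>j\<close> in its \<open>k\<close>-th power.\<close>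

definition deg1_series :: "nat \<Rightarrow> 'a::zero sconst \<Rightarrow> 'a fps fps" where
  "deg1_series n m = fps2 (\<lambda>i j. if i < n \<and> j < n then m i j 1 else 0)"

lemma deg1_series_nth: "deg1_series n m $ j $ i = (if i < n \<and> j < n then m i j 1 else 0)"
  by (simp add: deg1_series_def)

lemma coalg_morph_counit:
  "coalg_morph n m \<Longrightarrow> i < n \<Longrightarrow> j < n \<Longrightarrow> m i j 0 = (if i = 0 \<and> j = 0 then 1 else 0)"
  unfolding coalg_morph_def by blast

lemma coalg_morph_comult:
  assumes "coalg_morph n m" "i < n" "j < n" "k1 < n" "k2 < n"
  shows "(if k1 + k2 < n then m i j (k1 + k2) else 0) =
        (\<Sum>i1\<le>i. \<Sum>j1\<le>j. m i1 j1 k1 * m (i - i1) (j - j1) k2)"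
  using assms unfolding coalg_morph_def by blast

lemma coalg_morph_power_nth:
  assumes "coalg_morph n m" "2 \<le> n" "k \<le> n" "i < n" "j < n"
  shows "(deg1_series n m ^ k) $ j $ i = (if k < n then m i j k else 0)"
  using assms(3-5)
proof (induction k arbitrary: i j)
  case 0
  then show ?case using coalg_morph_counit[OF assms(1)] assms(2) by simp
next
  case (Suc k)
  show ?case
  proof (cases "k = 0")
    case True
    then show ?thesis using Suc.prems assms(2) by (simp add: deg1_series_nth One_nat_def)
  next
    case False
    have "(deg1_series n m ^ Suc k) $ j $ i =
          (\<Sum>i1\<le>i. \<Sum>j1\<le>j. m i1 j1 1 * m (i - i1) (j - j1) k)"
      unfolding power_Suc fps2_mult_nth sum.swap[of _ "{..j}"] using Suc assms(2)
      by (intro sum.cong refl arg_cong2[where f=times]) (auto simp: deg1_series_nth)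
    also have "\<dots> = (if Suc k < n then m i j (Suc k) else 0)"
      using coalg_morph_comult[OF assms(1) Suc.prems(2,3), of 1 k, symmetric] Suc.prems assms(2)
      by (simp add: Suc_eq_plus1_left)
    finally show ?thesis .
  qed
qed

lemma coalg_morph_x0_eq_0:
  fixes m :: "'a::{idom,ring_char_0} sconst"
  assumes "coalg_morph n m" "2 \<le> n" "m 1 0 1 \<noteq> 0"
  shows "deg1_series n m $ j $ 0 = 0"
  by (rule fps2_nilpotent_imp_x0_eq_0[where n=n])
    (use assms coalg_morph_power_nth[OF assms(1,2)] in \<open>auto simp: deg1_series_nth\<close>)

lemma coalg_morph_10_eq_0:
  fixes m :: "'a::idom sconst"
  assumes "coalg_morph n m" "2 \<le> n" "k < n" "k \<noteq> 1"
  shows "m 1 0 k = 0"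
proof -
  let ?S = "deg1_series n m"
  have "(?S $ 0 $ 0) ^ n = 0"
    using coalg_morph_power_nth[OF assms(1,2), of n 0 0] assms(2) by (simp add: fps_power_zeroth)
  then have S00: "?S $ 0 $ 0 = 0" by simp
  have "m 1 0 k = ((?S $ 0) ^ k) $ 1"
    using coalg_morph_power_nth[OF assms(1,2), of k 1 0] assms by (simp add: fps_power_zeroth)
  also have "\<dots> = 0"
    using startsby_zero_power_prefix[OF S00] assms(4) by (cases "k = 0") auto
  finally show ?thesis .
qed

lemma ap2_kd_right: "b < n \<Longrightarrow> ap2 n m F (\<lambda>k. kd k b) r = (\<Sum>k<n. F k * m k b r)"
  unfolding ap2_def kd_def by (simp add: mult_delta_left mult_delta_right)

definition magma_divisions :: "nat \<Rightarrow> 'a::comm_ring_1 sconst \<Rightarrow> 'a sconst \<Rightarrow> 'a sconst \<Rightarrow> 'a sconst \<Rightarrow> bool" where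
  "magma_divisions n p d u l \<longleftrightarrow> (\<forall>i<n. \<forall>j<n. \<forall>r<n.
     (\<Sum>j1\<le>j. ap2 n p (mv u i j1) (\<lambda>k. kd k (j - j1)) r) = kd j 0 * kd i r \<and>
     (\<Sum>j1\<le>j. ap2 n u (mv p i j1) (\<lambda>k. kd k (j - j1)) r) = kd j 0 * kd i r \<and>
     (\<Sum>j1\<le>j. ap2 n l (mv d i (j - j1)) (\<lambda>k. kd k j1) r) = kd j 0 * kd i r \<and>
     (\<Sum>j1\<le>j. ap2 n d (mv l i (j - j1)) (\<lambda>k. kd k j1) r) = kd j 0 * kd i r)"

lemma regular_q_magma_iff:
  "regular_q_magma n p d \<longleftrightarrow> coalg_morph n p \<and> coalg_morph n d \<and>
     (\<exists>u l. coalg_morph n u \<and> coalg_morph n l \<and> magma_divisions n p d u l)"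
  unfolding regular_q_magma_def magma_divisions_def ..

lemma regular_q_magma_101_nonzero:
  fixes p d :: "'a::idom sconst"
  assumes "regular_q_magma n p d" "2 \<le> n"
  shows "p 1 0 1 \<noteq> 0" "d 1 0 1 \<noteq> 0"
proof -
  have sum_10: "(\<Sum>k<n. m 1 0 k * m' k 0 1) = m 1 0 1 * m' 1 0 1"
    if "coalg_morph n m" for m m' :: "'a sconst"
  proof -
    have "(\<Sum>k<n. m 1 0 k * m' k 0 1) = (\<Sum>k\<in>{1}. m 1 0 k * m' k 0 1)"
      using coalg_morph_10_eq_0[OF that assms(2)] assms(2) by (intro sum.mono_neutral_right) auto
    then show ?thesis by simp
  qed
  obtain u l where "coalg_morph n u" "coalg_morph n d" and div: "magma_divisions n p d u l"
    using assms(1) unfolding regular_q_magma_iff by blast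
  note div_10 = div[unfolded magma_divisions_def, rule_format, of 1 0 1]
  have "ap2 n p (mv u 1 0) (\<lambda>k. kd k 0) 1 = 1"
    using div_10[THEN conjunct1] assms(2) by (simp add: kd_def)
  moreover have "ap2 n l (mv d 1 0) (\<lambda>k. kd k 0) 1 = 1"
    using div_10[THEN conjunct2, THEN conjunct2, THEN conjunct1] assms(2) by (simp add: kd_def)
  ultimately have "u 1 0 1 * p 1 0 1 = 1" "d 1 0 1 * l 1 0 1 = 1"
    using assms(2) sum_10 \<open>coalg_morph n u\<close> \<open>coalg_morph n d\<close> by (simp_all add: ap2_kd_right mv_def)
  then show "p 1 0 1 \<noteq> 0" "d 1 0 1 \<noteq> 0" by auto
qed

section \<open>The cycle axioms in degree one\<close>

text \<open>The coefficient of \<open>x\<^sup>i y\<^sup>a z\<^sup>h w\<^sup>b\<close> in \<open>M(Q1(x, y), Q2(z, w))\<close>, using only the terms of \<open>M\<close>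
  of degree \<open>< n\<close> in each variable.\<close>

definition comp_coeff ::
    "nat \<Rightarrow> 'a::comm_ring_1 fps fps \<Rightarrow> 'a fps fps \<Rightarrow> 'a fps fps \<Rightarrow> nat \<Rightarrow> nat \<Rightarrow> nat \<Rightarrow> nat \<Rightarrow> 'a" where
  "comp_coeff n M Q1 Q2 i a h b = (\<Sum>k<n. \<Sum>k'<n. (Q1 ^ k) $ a $ i * (Q2 ^ k') $ b $ h * M $ k' $ k)"

lemma ap2_mv_eq_comp_coeff:
  assumes "coalg_morph n m1" "coalg_morph n m2" "2 \<le> n" "i < n" "a < n" "h < n" "b < n"
  shows "ap2 n m (mv m1 i a) (mv m2 h b) 1 =
         comp_coeff n (deg1_series n m) (deg1_series n m1) (deg1_series n m2) i a h b"
  unfolding ap2_def mv_def comp_coeff_def using assms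
  by (intro sum.cong refl) (simp add: coalg_morph_power_nth deg1_series_nth)

lemma comp_coeff_x1:
  assumes "\<And>j. Q1 $ j $ 0 = 0" "1 < n"
  shows "comp_coeff n M Q1 Q2 1 a h b = Q1 $ a $ 1 * (\<Sum>k'<n. (Q2 ^ k') $ b $ h * M $ k' $ 1)"
proof -
  have "comp_coeff n M Q1 Q2 1 a h b =
        (\<Sum>k<n. (if k = 1 then Q1 $ a $ 1 else 0) * (\<Sum>k'<n. (Q2 ^ k') $ b $ h * M $ k' $ k))"
    unfolding comp_coeff_def fps2_power_nth_1[OF assms(1)] by (simp add: sum_distrib_left mult.assoc)
  then show ?thesis using assms(2) by (simp add: mult_delta_left)
qed

lemma comp_coeff_z1:
  assumes "\<And>j. Q2 $ j $ 0 = 0" "1 < n"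
  shows "comp_coeff n M Q1 Q2 i a 1 b = Q2 $ b $ 1 * (\<Sum>k<n. (Q1 ^ k) $ a $ i * M $ 1 $ k)"
  using assms(2) unfolding comp_coeff_def fps2_power_nth_1[OF assms(1)]
  by (simp add: mult_delta_left mult_delta_right sum_distrib_left mult_ac)

lemma comp_coeff_z0:
  assumes "\<And>j. Q2 $ j $ 0 = 0" "0 < n"
  shows "comp_coeff n M Q1 Q2 i a 0 b = (if b = 0 then \<Sum>k<n. (Q1 ^ k) $ a $ i * M $ 0 $ k else 0)"
  using assms(2) unfolding comp_coeff_def fps2_power_nth_0[OF assms(1)]
  by (simp add: mult_delta_left mult_delta_right)

lemma comp_coeff_first_order:
  assumes "Q1 $ 0 = fps_X" "Q2 $ 0 = fps_X" "i < n" "h < n"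
    and "\<And>i j. n \<le> i \<or> n \<le> j \<Longrightarrow> M $ j $ i = 0"
  shows "comp_coeff n M Q1 Q2 i 0 h 1 + comp_coeff n M Q1 Q2 i 1 h 0 =
         (fps_deriv (coeff_x M i) * Q2 $ 1) $ h + (fps_deriv (M $ h) * Q1 $ 1) $ i"
proof -
  have "comp_coeff n M Q1 Q2 i 0 h 1 = (\<Sum>k'<n. (Q2 ^ k') $ 1 $ h * M $ k' $ i)"
    using assms(3) unfolding comp_coeff_def fps2_power_y0[OF assms(1)]
    by (subst sum.swap) (simp add: mult_delta_left mult_delta_right)
  also have "\<dots> = (fps_deriv (coeff_x M i) * Q2 $ 1) $ h"
    unfolding coeff_x_def by (rule sum_fps2_power_y1[OF assms(2,4)]) (simp add: assms(5))
  moreover have "comp_coeff n M Q1 Q2 i 1 h 0 = (\<Sum>k<n. (Q1 ^ k) $ 1 $ i * M $ h $ k)"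
    using assms(4) unfolding comp_coeff_def fps2_power_y0[OF assms(2)]
    by (simp add: mult_delta_left mult_delta_right)
  moreover have "\<dots> = (fps_deriv (M $ h) * Q1 $ 1) $ i"
    using sum_fps2_power_y1[OF assms(1,3), of "\<lambda>k. M $ h $ k"] assms(5) by (simp add: fps_nth_inverse)
  ultimately show ?thesis by simp
qed

lemma comp_coeff_x1_z1:
  assumes "\<And>j. Q1 $ j $ 0 = 0" "\<And>j. Q2 $ j $ 0 = 0" "1 < n"
  shows "comp_coeff n M Q1 Q2 1 a 1 b = Q1 $ a $ 1 * Q2 $ b $ 1 * M $ 1 $ 1"
  using assms(3) unfolding comp_coeff_x1[OF assms(1,3)] fps2_power_nth_1[OF assms(2)]
  by (simp add: mult_delta_left)

lemma sum_comp_coeff_x1_z1: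
  assumes "\<And>j. Q1 $ j $ 0 = 0" "\<And>j. Q2 $ j $ 0 = 0" "1 < n"
  shows "(\<Sum>j1\<le>j. comp_coeff n M Q1 Q2 1 j1 1 (j - j1)) = M $ 1 $ 1 * (coeff_x Q1 1 * coeff_x Q2 1) $ j"
  by (simp add: comp_coeff_x1_z1[OF assms] fps_mult_nth atLeast0AtMost sum_distrib_left mult_ac)

lemma sum_comp_coeff_z1:
  assumes "\<And>j. Q2 $ j $ 0 = 0" "1 < n"
  shows "(\<Sum>h1\<le>h. comp_coeff n M Q1 Q2 i (h - h1) 1 h1) =
         (\<Sum>h1\<le>h. \<Sum>k<n. (Q1 ^ k) $ (h - h1) $ i * coeff_x Q2 1 $ h1 * M $ 1 $ k)"
  by (simp add: comp_coeff_z1[OF assms] sum_distrib_left mult_ac)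

section \<open>A first-order PDE determining the coalgebra\<close>

text \<open>Modulo \<open>(x\<^sup>n, y\<^sup>n)\<close>, the series \<open>Q\<close> solves the first-order PDE
  \<open>a(y) Q\<^sub>y + b(x) Q\<^sub>x = f(y) b(Q)\<close>.\<close>

definition cycle_pde :: "nat \<Rightarrow> 'a::comm_ring_1 fps fps \<Rightarrow> 'a fps \<Rightarrow> 'a fps \<Rightarrow> 'a fps \<Rightarrow> bool" where
  "cycle_pde n Q f a b \<longleftrightarrow> (\<forall>i<n. \<forall>h<n.
     (fps_deriv (coeff_x Q i) * a) $ h + (fps_deriv (Q $ h) * b) $ i =
     (\<Sum>h1\<le>h. \<Sum>k<n. (Q ^ k) $ (h - h1) $ i * f $ h1 * b $ k))"

lemma cycle_pde_x1:
  assumes "cycle_pde n Q f a b" "\<And>j. Q $ j $ 0 = 0" "b $ 0 = 0" "1 < n" "h < n"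
  shows "(fps_deriv (coeff_x Q 1) * a) $ h + Q $ h $ 1 * b $ 1 = b $ 1 * (f * coeff_x Q 1) $ h"
proof -
  have "(fps_deriv (coeff_x Q 1) * a) $ h + (fps_deriv (Q $ h) * b) $ 1 =
        (\<Sum>h1\<le>h. \<Sum>k<n. (Q ^ k) $ (h - h1) $ 1 * f $ h1 * b $ k)"
    using assms(1,4,5) unfolding cycle_pde_def by blast
  also have "\<dots> = (\<Sum>h1\<le>h. Q $ (h - h1) $ 1 * f $ h1 * b $ 1)"
    using assms(4) by (intro sum.cong refl) (simp add: fps2_power_nth_1[OF assms(2)] mult_delta_left)
  also have "\<dots> = b $ 1 * (f * coeff_x Q 1) $ h"
    by (simp add: fps_mult_nth atLeast0AtMost sum_distrib_left mult_ac)
  finally show ?thesis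
    by (simp only: fps_deriv_mult_nth_1[OF assms(3)] coeff_x_nth)
qed

lemma cycle_pde_rhs_diff:
  fixes Q Q' :: "'a::comm_ring_1 fps fps"
  assumes x0: "\<And>j. Q $ j $ 0 = 0" "\<And>j. Q' $ j $ 0 = 0"
    and agree: "\<And>a b. a < i \<Longrightarrow> b \<le> h \<Longrightarrow> Q $ b $ a = Q' $ b $ a"
      "\<And>b. b < h \<Longrightarrow> Q $ b $ i = Q' $ b $ i"
    and "g $ 0 = 0" "f $ 0 = 1" "1 < n"
  shows "(\<Sum>h1\<le>h. \<Sum>k<n. (Q ^ k) $ (h - h1) $ i * f $ h1 * g $ k) -
         (\<Sum>h1\<le>h. \<Sum>k<n. (Q' ^ k) $ (h - h1) $ i * f $ h1 * g $ k) = (Q $ h $ i - Q' $ h $ i) * g $ 1"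
proof -
  have term_diff: "(Q ^ k) $ (h - h1) $ i * f $ h1 * g $ k - (Q' ^ k) $ (h - h1) $ i * f $ h1 * g $ k =
      (if k = 1 then if h1 = 0 then (Q $ h $ i - Q' $ h $ i) * g $ 1 else 0 else 0)" if "h1 \<le> h" for h1 k
  proof -
    consider "k = 0" | "k = 1" | "2 \<le> k" by linarith
    then show ?thesis
    proof cases
      case 1
      then show ?thesis using assms(5) by simp
    next
      case 2
      then show ?thesis
        using agree(2)[of "h - h1"] that assms(6) by (cases "h1 = 0") (auto simp: algebra_simps)
    next
      case 3
      have "(Q ^ k) $ (h - h1) $ i = (Q' ^ k) $ (h - h1) $ i"
        by (rule fps2_power_nth_agree[OF x0 agree(1) 3]) auto
      then show ?thesis using 3 by simp
    qed
  qed
  have "(\<Sum>h1\<le>h. \<Sum>k<n. (Q ^ k) $ (h - h1) $ i * f $ h1 * g $ k) -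
        (\<Sum>h1\<le>h. \<Sum>k<n. (Q' ^ k) $ (h - h1) $ i * f $ h1 * g $ k) =
        (\<Sum>h1\<le>h. \<Sum>k<n. if k = 1 then if h1 = 0 then (Q $ h $ i - Q' $ h $ i) * g $ 1 else 0 else 0)"
    by (simp add: sum_subtractf[symmetric] term_diff)
  also have "\<dots> = (Q $ h $ i - Q' $ h $ i) * g $ 1"
    using assms(7) by simp
  finally show ?thesis .
qed

text \<open>At \<open>x\<^sup>i y\<^sup>h\<close> the PDE reads \<open>(h + i) Q\<^sub>i\<^sub>h g\<^sub>1 = Q\<^sub>i\<^sub>h g\<^sub>1 + (terms in earlier coefficients)\<close>,
  so the coefficients are determined recursively once \<open>h + i \<ge> 2\<close>.\<close>

lemma cycle_pde_coeff_eq: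
  fixes Q Q' :: "'a::field_char_0 fps fps"
  assumes pde: "cycle_pde n Q f g g" "cycle_pde n Q' f g g"
    and x0: "\<And>j. Q $ j $ 0 = 0" "\<And>j. Q' $ j $ 0 = 0"
    and g: "g $ 0 = 0" "g $ 1 \<noteq> 0" and f: "f $ 0 = 1"
    and ih: "1 \<le> i" "1 \<le> h" "i < n" "h < n"
    and agree: "\<And>a b. a < i \<Longrightarrow> b \<le> h \<Longrightarrow> Q $ b $ a = Q' $ b $ a"
      "\<And>b. b < h \<Longrightarrow> Q $ b $ i = Q' $ b $ i"
  shows "Q $ h $ i = Q' $ h $ i"
proof -
  let ?\<Delta> = "Q $ h $ i - Q' $ h $ i"
  let ?A = "\<lambda>Q. (fps_deriv (coeff_x Q i) * g) $ h" and ?B = "\<lambda>Q. (fps_deriv (Q $ h) * g) $ i"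
    and ?R = "\<lambda>Q. \<Sum>h1\<le>h. \<Sum>k<n. (Q ^ k) $ (h - h1) $ i * f $ h1 * g $ k"
  have "?A Q - ?A Q' = of_nat h * ?\<Delta> * g $ 1"
    using fps_deriv_mult_nth_diff[of h "coeff_x Q i" "coeff_x Q' i" g] agree(2) g(1) ih(2) by simp
  moreover have "?B Q - ?B Q' = of_nat i * ?\<Delta> * g $ 1"
    using fps_deriv_mult_nth_diff[of i "Q $ h" "Q' $ h" g] agree(1) g(1) ih(1) by simp
  ultimately have "of_nat h * ?\<Delta> * g $ 1 + of_nat i * ?\<Delta> * g $ 1 = (?A Q + ?B Q) - (?A Q' + ?B Q')"
    by (simp only: add_diff_add)
  also have "\<dots> = ?R Q - ?R Q'"
    using pde ih unfolding cycle_pde_def by simp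
  also have "\<dots> = ?\<Delta> * g $ 1"
    by (rule cycle_pde_rhs_diff[OF x0 agree g(1) f le_less_trans[OF ih(1,3)]])
  finally have "of_nat (h + i - 1) * ?\<Delta> * g $ 1 = 0"
    using ih(1) by (simp add: algebra_simps of_nat_diff)
  moreover have "(of_nat (h + i - 1) :: 'a) \<noteq> 0"
    using ih(1,2) by (simp del: of_nat_diff)
  ultimately show ?thesis using g(2) by simp
qed

lemma cycle_pde_unique:
  fixes Q Q' :: "'a::field_char_0 fps fps"
  assumes pde: "cycle_pde n Q f g g" "cycle_pde n Q' f g g"
    and x0: "\<And>j. Q $ j $ 0 = 0" "\<And>j. Q' $ j $ 0 = 0"
    and y0: "Q $ 0 = fps_X" "Q' $ 0 = fps_X"
    and g: "g $ 0 = 0" "g $ 1 \<noteq> 0" and f: "f $ 0 = 1"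
  shows "i < n \<Longrightarrow> h < n \<Longrightarrow> Q $ h $ i = Q' $ h $ i"
proof (induction i arbitrary: h rule: less_induct)
  case (less i)
  note earlier_x_powers = less.IH
  show ?case using less.prems
  proof (induction h rule: less_induct)
    case (less h)
    show ?case
    proof (cases "i = 0 \<or> h = 0")
      case True
      then show ?thesis using x0 y0 by auto
    next
      case False
      then have "1 \<le> i" "1 \<le> h" by auto
      show ?thesis
      proof (rule cycle_pde_coeff_eq[OF pde x0 g f \<open>1 \<le> i\<close> \<open>1 \<le> h\<close>])
        show "i < n" "h < n"
          using less.prems by auto
        show "Q $ b $ a = Q' $ b $ a" if "a < i" "b \<le> h" for a b
          using that less.prems earlier_x_powers by auto
        show "Q $ b $ i = Q' $ b $ i" if "b < h" for b
          using that less by auto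
      qed
    qed
  qed
qed

lemma cycle_pde_cutoff_cong:
  assumes "cycle_pde n Q f g g" "fps_cutoff n g = fps_cutoff n g'"
  shows "cycle_pde n Q f g' g'"
  unfolding cycle_pde_def
proof (intro allI impI)
  fix i h assume ih: "i < n" "h < n"
  have mult: "(A * g) $ m = (A * g') $ m" if "m < n" for A m
    using fps_cutoff_mult_cong[of n A A g g', OF refl assms(2)] that
    unfolding fps_cutoff_eq_fps_cutoff_iff by simp
  have "(fps_deriv (coeff_x Q i) * g') $ h + (fps_deriv (Q $ h) * g') $ i =
        (fps_deriv (coeff_x Q i) * g) $ h + (fps_deriv (Q $ h) * g) $ i"
    using mult[OF ih(1)] mult[OF ih(2)] by simp
  also have "\<dots> = (\<Sum>h1\<le>h. \<Sum>k<n. (Q ^ k) $ (h - h1) $ i * f $ h1 * g $ k)"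
    using assms(1) ih unfolding cycle_pde_def by blast
  also have "\<dots> = (\<Sum>h1\<le>h. \<Sum>k<n. (Q ^ k) $ (h - h1) $ i * f $ h1 * g' $ k)"
    using assms(2) unfolding fps_cutoff_eq_fps_cutoff_iff by (intro sum.cong refl) simp
  finally show "(fps_deriv (coeff_x Q i) * g') $ h + (fps_deriv (Q $ h) * g') $ i =
             (\<Sum>h1\<le>h. \<Sum>k<n. (Q ^ k) $ (h - h1) $ i * f $ h1 * g' $ k)" .
qed

locale q_cycle_coalgebra =
  fixes n :: nat and p d :: "'a::field_char_0 sconst"
  assumes n: "2 \<le> n" and cycle: "regular_q_cycle n p d" and p111: "p 1 1 1 \<noteq> 0"
begin

abbreviation "P \<equiv> deg1_series n p"
abbreviation "D \<equiv> deg1_series n d"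

lemma regular_magma: "regular_q_magma n p d"
  using cycle unfolding regular_q_cycle_def by blast

lemma coalg_p: "coalg_morph n p" and coalg_d: "coalg_morph n d"
  using regular_magma unfolding regular_q_magma_def by blast+

lemma cycle_axioms:
  assumes "i < n" "j < n" "h < n"
  shows "(\<Sum>j1\<le>j. comp_coeff n P P D i j1 h (j - j1)) = (\<Sum>h1\<le>h. comp_coeff n P P P i (h - h1) j h1)"
    and "(\<Sum>j1\<le>j. comp_coeff n D P P i j1 h (j - j1)) = (\<Sum>h1\<le>h. comp_coeff n P D D i (h - h1) j h1)"
    and "(\<Sum>j1\<le>j. comp_coeff n D D D i j1 h (j - j1)) = (\<Sum>h1\<le>h. comp_coeff n D D P i (h - h1) j h1)"
proof -
  have ax: "(\<Sum>j1\<le>j. ap2 n p (mv p i j1) (mv d h (j - j1)) 1) =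
              (\<Sum>h1\<le>h. ap2 n p (mv p i (h - h1)) (mv p j h1) 1)"
    "(\<Sum>j1\<le>j. ap2 n d (mv p i j1) (mv p h (j - j1)) 1) =
              (\<Sum>h1\<le>h. ap2 n p (mv d i (h - h1)) (mv d j h1) 1)"
    "(\<Sum>j1\<le>j. ap2 n d (mv d i j1) (mv d h (j - j1)) 1) =
              (\<Sum>h1\<le>h. ap2 n d (mv d i (h - h1)) (mv p j h1) 1)"
    using cycle assms n unfolding regular_q_cycle_def by auto
  note comp = ap2_mv_eq_comp_coeff[OF _ _ n assms(1)]
  show "(\<Sum>j1\<le>j. comp_coeff n P P D i j1 h (j - j1)) = (\<Sum>h1\<le>h. comp_coeff n P P P i (h - h1) j h1)"
    using ax(1) assms by (simp add: comp[OF coalg_p coalg_d] comp[OF coalg_p coalg_p])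
  show "(\<Sum>j1\<le>j. comp_coeff n D P P i j1 h (j - j1)) = (\<Sum>h1\<le>h. comp_coeff n P D D i (h - h1) j h1)"
    using ax(2) assms by (simp add: comp[OF coalg_p coalg_p] comp[OF coalg_d coalg_d])
  show "(\<Sum>j1\<le>j. comp_coeff n D D D i j1 h (j - j1)) = (\<Sum>h1\<le>h. comp_coeff n D D P i (h - h1) j h1)"
    using ax(3) assms by (simp add: comp[OF coalg_d coalg_d] comp[OF coalg_d coalg_p])
qed

lemma P_x0: "P $ j $ 0 = 0" and D_x0: "D $ j $ 0 = 0"
  using coalg_morph_x0_eq_0[OF coalg_p n] coalg_morph_x0_eq_0[OF coalg_d n]
    regular_q_magma_101_nonzero[OF regular_magma n]
  by auto

lemma P_eq_0_outside: "n \<le> i \<or> n \<le> j \<Longrightarrow> P $ j $ i = 0" and D_eq_0_outside: "n \<le> i \<or> n \<le> j \<Longrightarrow> D $ j $ i = 0"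
  by (auto simp: deg1_series_nth)

lemma P_01_nonzero: "P $ 0 $ 1 \<noteq> 0"
  using regular_q_magma_101_nonzero[OF regular_magma n] n by (simp add: deg1_series_nth)

lemma P_y0: "P $ 0 = fps_X"
proof -
  have comp_P: "P $ j $ 1 = (\<Sum>k<n. P $ k $ 1 * ((P $ 0) ^ k) $ j)" if "j < n" for j
  proof -
    have "P $ j $ 1 * P $ 0 $ 1 = (\<Sum>j1\<le>j. comp_coeff n P P D 1 j1 0 (j - j1))"
      using n by (simp add: comp_coeff_z0[OF D_x0] fps2_power_nth_1[OF P_x0] mult_delta_left)
    also have "\<dots> = P $ 0 $ 1 * (\<Sum>k<n. ((P $ 0) ^ k) $ j * P $ k $ 1)"
      using cycle_axioms(1)[of 1 j 0] n that by (simp add: comp_coeff_x1[OF P_x0] fps_power_zeroth)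
    finally show ?thesis using P_01_nonzero by (simp add: mult_ac)
  qed
  have "P $ 0 $ j = (if j = 1 then 1 else 0)" if "j < n" for j
    using compose_eq_self_imp_X[of n "\<lambda>k. P $ k $ 1" "P $ 0", OF comp_P P_x0 _ n that] p111 n
    by (simp add: deg1_series_nth)
  then show ?thesis
    using n by (intro fps_ext) (auto simp: deg1_series_nth)
qed

lemma D_y0: "D $ 0 = fps_X"
proof -
  have comp_D: "P $ h $ 1 = (\<Sum>k<n. P $ k $ 1 * ((D $ 0) ^ k) $ h)" if "h < n" for h
  proof -
    have "P $ h $ 1 = (\<Sum>h1\<le>h. comp_coeff n P P P 1 (h - h1) 0 h1)"
      using n P_y0 by (simp add: comp_coeff_z0[OF P_x0] fps2_power_nth_1[OF P_x0] mult_delta_left)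
    also have "\<dots> = (\<Sum>k<n. ((D $ 0) ^ k) $ h * P $ k $ 1)"
      using cycle_axioms(1)[of 1 0 h] n that P_y0 by (simp add: comp_coeff_x1[OF P_x0] fps_power_zeroth)
    finally show ?thesis by (simp add: mult_ac)
  qed
  have "D $ 0 $ j = (if j = 1 then 1 else 0)" if "j < n" for j
    using compose_eq_self_imp_X[of n "\<lambda>k. P $ k $ 1" "D $ 0", OF comp_D D_x0 _ n that] p111 n
    by (simp add: deg1_series_nth)
  then show ?thesis
    using n by (intro fps_ext) (auto simp: deg1_series_nth)
qed

text \<open>The coefficients of \<open>x\<close> in \<open>P\<close>, \<open>D\<close> (series in \<open>y\<close>) and of \<open>y\<close> (series in \<open>x\<close>); for a standard
  cycle coalgebra they are the \<open>f\<close> and \<open>g\<close> of its definition.\<close>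

abbreviation "fP \<equiv> coeff_x P 1"
abbreviation "fD \<equiv> coeff_x D 1"
abbreviation "gP \<equiv> P $ 1"
abbreviation "gD \<equiv> D $ 1"

lemma P_cycle_pde: "cycle_pde n P fP gD gP"
  unfolding cycle_pde_def
proof (intro allI impI)
  fix i h assume ih: "i < n" "h < n"
  have "(fps_deriv (coeff_x P i) * gD) $ h + (fps_deriv (P $ h) * gP) $ i =
        (\<Sum>j1\<le>1. comp_coeff n P P D i j1 h (1 - j1))"
    using comp_coeff_first_order[OF P_y0 D_y0 ih P_eq_0_outside] by (simp add: sum_atMost_1)
  also have "\<dots> = (\<Sum>h1\<le>h. comp_coeff n P P P i (h - h1) 1 h1)"
    using cycle_axioms(1)[of i 1 h] ih n by simp
  finally show "(fps_deriv (coeff_x P i) * gD) $ h + (fps_deriv (P $ h) * gP) $ i =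
        (\<Sum>h1\<le>h. \<Sum>k<n. (P ^ k) $ (h - h1) $ i * fP $ h1 * gP $ k)"
    using n by (simp add: sum_comp_coeff_z1[OF P_x0])
qed

lemma D_cycle_pde: "cycle_pde n D fP gD gD"
  unfolding cycle_pde_def
proof (intro allI impI)
  fix i h assume ih: "i < n" "h < n"
  have "(fps_deriv (coeff_x D i) * gD) $ h + (fps_deriv (D $ h) * gD) $ i =
        (\<Sum>j1\<le>1. comp_coeff n D D D i j1 h (1 - j1))"
    using comp_coeff_first_order[OF D_y0 D_y0 ih D_eq_0_outside] by (simp add: sum_atMost_1)
  also have "\<dots> = (\<Sum>h1\<le>h. comp_coeff n D D P i (h - h1) 1 h1)"
    using cycle_axioms(3)[of i 1 h] ih n by simp
  finally show "(fps_deriv (coeff_x D i) * gD) $ h + (fps_deriv (D $ h) * gD) $ i =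
        (\<Sum>h1\<le>h. \<Sum>k<n. (D ^ k) $ (h - h1) $ i * fP $ h1 * gD $ k)"
    using n by (simp add: sum_comp_coeff_z1[OF P_x0])
qed

lemma g_0: "gP $ 0 = 0" "gD $ 0 = 0"
  using P_x0 D_x0 by simp_all

lemma cycle1_x_coeff: "j < n \<Longrightarrow> (fps_deriv fP * gP) $ j = gP $ 1 * ((fP * fD) $ j - fP $ j)"
proof -
  assume j: "j < n"
  have "gP $ 1 * (fP * fD) $ j = (\<Sum>j1\<le>j. comp_coeff n P P D 1 j1 1 (j - j1))"
    using n by (simp add: sum_comp_coeff_x1_z1[OF P_x0 D_x0])
  also have "\<dots> = (\<Sum>h1\<le>1. comp_coeff n P P P 1 (1 - h1) j h1)"
    using cycle_axioms(1)[of 1 j 1] j n by simp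
  also have "\<dots> = fP $ j * gP $ 1 + (fps_deriv fP * gP) $ j"
    using comp_coeff_first_order[OF P_y0 P_y0 _ j P_eq_0_outside, of 1] n
    by (simp add: sum_atMost_1 fps_deriv_mult_nth_1[OF g_0(1)] add.commute)
  finally show ?thesis by (simp add: algebra_simps)
qed

lemma cycle2_x_coeff: "j < n \<Longrightarrow> (fps_deriv fP * gD) $ j = gD $ 1 * ((fP * fP) $ j - fP $ j)"
proof -
  assume j: "j < n"
  have "gD $ 1 * (fP * fP) $ j = (\<Sum>j1\<le>j. comp_coeff n D P P 1 j1 1 (j - j1))"
    using n by (simp add: sum_comp_coeff_x1_z1[OF P_x0 P_x0])
  also have "\<dots> = (\<Sum>h1\<le>1. comp_coeff n P D D 1 (1 - h1) j h1)"
    using cycle_axioms(2)[of 1 j 1] j n by simp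
  also have "\<dots> = fP $ j * gD $ 1 + (fps_deriv fP * gD) $ j"
    using comp_coeff_first_order[OF D_y0 D_y0 _ j P_eq_0_outside, of 1] n
    by (simp add: sum_atMost_1 fps_deriv_mult_nth_1[OF g_0(2)] add.commute)
  finally show ?thesis by (simp add: algebra_simps)
qed

lemma P_cycle_pde_x_coeff: "h < n \<Longrightarrow> (fps_deriv fP * gD) $ h = gP $ 1 * ((fP * fP) $ h - fP $ h)"
  using cycle_pde_x1[OF P_cycle_pde P_x0 g_0(1), of h] n
  by (simp add: right_diff_distrib eq_diff_eq mult.commute)

lemma D_cycle_pde_x_coeff: "h < n \<Longrightarrow> (fps_deriv fD * gD) $ h = gD $ 1 * ((fP * fD) $ h - fD $ h)"
  using cycle_pde_x1[OF D_cycle_pde D_x0 g_0(2), of h] n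
  by (simp add: right_diff_distrib eq_diff_eq mult.commute)

lemma fP_0: "fP $ 0 = 1" and fD_0: "fD $ 0 = 1"
  using P_y0 D_y0 by simp_all

lemma gP_1_nonzero: "gP $ 1 \<noteq> 0"
  using p111 n by (simp add: deg1_series_nth)

lemma gD_1_eq_gP_1: "gD $ 1 = gP $ 1"
proof -
  have fP_1: "(fP * fP) $ 1 - fP $ 1 = gP $ 1"
    using fP_0 by (simp add: fps_mult_nth atLeast0AtMost sum_atMost_1)
  have "gD $ 1 * gP $ 1 = (fps_deriv fP * gD) $ 1"
    using cycle2_x_coeff[of 1, unfolded fP_1] n by simp
  also have "\<dots> = gP $ 1 * gP $ 1"
    using P_cycle_pde_x_coeff[of 1, unfolded fP_1] n by simp
  finally show ?thesis using gP_1_nonzero by simp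
qed

lemma fD_eq_fP: "fD = fP"
proof -
  have "fps_cutoff n fD = fps_cutoff n fP"
  proof (rule fps_cutoff_eq_if_wronskian[OF riccati_wronskian_cutoff_eq_0[OF _ _ gP_1_nonzero fP_0]])
    show "fps_cutoff n (fps_deriv fP * gD) = fps_cutoff n (fps_const (gP $ 1) * (fP * fP - fP))"
      unfolding fps_cutoff_eq_fps_cutoff_iff using P_cycle_pde_x_coeff by simp
    show "fps_cutoff n (fps_deriv fD * gD) = fps_cutoff n (fps_const (gP $ 1) * (fD * fP - fD))"
      unfolding fps_cutoff_eq_fps_cutoff_iff using D_cycle_pde_x_coeff gD_1_eq_gP_1
      by (simp add: mult.commute)
  qed (use fP_0 fD_0 in simp_all)
  then show ?thesis
    unfolding fps_cutoff_eq_fps_cutoff_iff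
    by (intro fps_ext) (metis D_eq_0_outside P_eq_0_outside coeff_x_nth not_less)
qed

lemma gD_eq_gP: "gD = gP"
proof -
  have "fps_cutoff n (fps_deriv fP * gD) = fps_cutoff n (fps_deriv fP * gP)"
    unfolding fps_cutoff_eq_fps_cutoff_iff using cycle1_x_coeff P_cycle_pde_x_coeff fD_eq_fP by simp
  then have "fps_cutoff n gD = fps_cutoff n gP"
    by (rule fps_cutoff_mult_cancel[rotated]) (use gP_1_nonzero in \<open>simp add: One_nat_def\<close>)
  then show ?thesis
    unfolding fps_cutoff_eq_fps_cutoff_iff
    by (intro fps_ext) (metis D_eq_0_outside P_eq_0_outside not_less)
qed

lemma D_eq_P: "D = P"
proof -
  have "D $ h $ i = P $ h $ i" if "i < n" "h < n" for i h
    using cycle_pde_unique[OF D_cycle_pde[unfolded gD_eq_gP] P_cycle_pde[unfolded gD_eq_gP]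
        D_x0 P_x0 D_y0 P_y0 g_0(1) gP_1_nonzero fP_0 that] .
  then show ?thesis
    by (intro fps_ext) (metis D_eq_0_outside P_eq_0_outside not_less)
qed

lemma d_eq_p: "i < n \<Longrightarrow> j < n \<Longrightarrow> k < n \<Longrightarrow> d i j k = p i j k"
  using coalg_morph_power_nth[OF coalg_d n, of k i j] coalg_morph_power_nth[OF coalg_p n, of k i j] D_eq_P
  by simp

end

section \<open>Standard cycle coalgebras of degree one\<close>

lemma lift_y_nth [simp]: "lift_y F $ v = fps_const (F $ v)"
  by (simp add: lift_y_def)

lemma deriv_x_nth [simp]: "deriv_x G $ v = fps_deriv (G $ v)"
  by (simp add: deriv_x_def)

lemma deriv_x_add [simp]: "deriv_x (A + B) = deriv_x A + deriv_x B"
  by (intro fps_ext) simp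

lemma deriv_x_diff [simp]: "deriv_x (A - B) = deriv_x A - deriv_x (B :: 'a::comm_ring_1 fps fps)"
  by (intro fps_ext) simp

lemma deriv_x_mult: "deriv_x (A * B) = deriv_x A * B + A * deriv_x (B :: 'a::comm_ring_1 fps fps)"
  by (intro fps_ext) (simp add: fps_mult_nth fps_deriv_sum sum.distrib add.commute)

lemma deriv_x_const [simp]: "deriv_x (fps_const c) = fps_const (fps_deriv (c :: 'a::comm_ring_1 fps))"
  by (intro fps_ext) auto

lemma deriv_x_lift_y [simp]: "deriv_x (lift_y F) = 0"
  by (intro fps_ext) simp

lemma fps_deriv_deriv_x: "fps_deriv (deriv_x G) = deriv_x (fps_deriv (G :: 'a::comm_ring_1 fps fps))"
  by (intro fps_ext) (simp add: fps_of_nat[symmetric])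

lemma deriv_x_power:
  "deriv_x (A ^ Suc m) = of_nat (Suc m) * A ^ m * deriv_x (A :: 'a::comm_ring_1 fps fps)"
  by (induction m) (simp_all add: deriv_x_mult algebra_simps)

lemma fps_const_sum: "fps_const (sum f A) = (\<Sum>x\<in>A. fps_const (f x :: 'a::comm_ring_1))"
  by (induction A rule: infinite_finite_induct) (auto simp flip: fps_const_add)

lemma lift_y_mult: "lift_y (A * B) = lift_y A * lift_y (B :: 'a::comm_ring_1 fps)"
  by (intro fps_ext) (simp add: fps_mult_nth fps_const_sum[symmetric])

lemma lift_y_one [simp]: "lift_y 1 = 1"
  by (intro fps_ext) (simp add: fps_one_nth)

lemma lift_y_diff: "lift_y (A - B) = lift_y A - lift_y (B :: 'a::comm_ring_1 fps)"
  by (intro fps_ext) simp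

text \<open>The defining equation of \<open>G\<close> in \<open>SCC(f)\<close>, \<open>G\<^sub>y = g(x) f'(y) G\<^sub>x - (f(y) - 1) G\<^sub>y\<close>, rearranged to
  \<open>f(y) G\<^sub>y = g(x) f'(y) G\<^sub>x\<close>.\<close>

definition scc_pde :: "'a::comm_ring_1 fps \<Rightarrow> 'a fps \<Rightarrow> 'a fps fps \<Rightarrow> bool" where
  "scc_pde f g W \<longleftrightarrow> lift_y f * fps_deriv W = fps_const g * lift_y (fps_deriv f) * deriv_x W"

lemma scc_pde_diff: "scc_pde f g W1 \<Longrightarrow> scc_pde f g W2 \<Longrightarrow> scc_pde f g (W1 - W2)"
  unfolding scc_pde_def by (simp add: algebra_simps)

lemma scc_pde_coeff:
  assumes "scc_pde f g W"
  shows "(\<Sum>i=0..v. f $ i * (of_nat (v - i + 1) * W $ (v - i + 1) $ u)) =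
         (\<Sum>i=0..v. fps_deriv f $ i * (g * fps_deriv (W $ (v - i))) $ u)"
proof -
  have "(\<Sum>i=0..v. f $ i * (of_nat (v - i + 1) * W $ (v - i + 1) $ u)) = (lift_y f * fps_deriv W) $ v $ u"
    unfolding fps_mult_nth lift_y_nth fps_deriv_nth
    by (simp only: fps_sum_nth fps_mult_left_const_nth fps_of_nat[symmetric])
  also have "\<dots> = (fps_const g * lift_y (fps_deriv f) * deriv_x W) $ v $ u"
    using assms unfolding scc_pde_def by simp
  also have "(fps_const g * lift_y (fps_deriv f) * deriv_x W) $ v =
      g * (lift_y (fps_deriv f) * deriv_x W) $ v"
    by (simp only: mult.assoc fps_mult_left_const_nth)
  also have "(lift_y (fps_deriv f) * deriv_x W) $ v =
      (\<Sum>i=0..v. fps_const (fps_deriv f $ i) * fps_deriv (W $ (v - i)))"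
    unfolding fps_mult_nth lift_y_nth deriv_x_nth ..
  also have "g * \<dots> = (\<Sum>i=0..v. fps_const (fps_deriv f $ i) * (g * fps_deriv (W $ (v - i))))"
    by (simp add: sum_distrib_left mult_ac)
  finally show ?thesis
    by (simp only: fps_sum_nth fps_mult_left_const_nth)
qed

lemma scc_pde_zero_init:
  fixes f g :: "'a::field_char_0 fps" and W :: "'a fps fps"
  assumes pde: "scc_pde f g W" and init: "\<And>u. u < N \<Longrightarrow> W $ 0 $ u = 0"
    and f: "f $ 0 = 1" and g: "g $ 0 = 0"
  shows "u < N \<Longrightarrow> W $ v $ u = 0"
proof (induction v arbitrary: u rule: less_induct)
  case (less v)
  show ?case
  proof (cases v)
    case 0
    then show ?thesis using init less.prems by simp
  next
    case (Suc w)
    have earlier: "W $ v' $ u' = 0" if "v' \<le> w" "u' < N" for v' u'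
      using less.IH that Suc by auto
    have "g $ t * fps_deriv (W $ (w - i)) $ (u - t) = 0" if "t \<le> u" for i t
      using g less.prems that by (cases t) (auto simp: earlier)
    then have "(g * fps_deriv (W $ (w - i))) $ u = 0" for i
      unfolding fps_mult_nth by (intro sum.neutral) auto
    then have "(\<Sum>i=0..w. f $ i * (of_nat (w - i + 1) * W $ (w - i + 1) $ u)) = 0"
      using scc_pde_coeff[OF pde, of w u] by simp
    moreover have "(\<Sum>i=0..w. f $ i * (of_nat (w - i + 1) * W $ (w - i + 1) $ u)) =
                   (\<Sum>i\<in>{0}. f $ i * (of_nat (w - i + 1) * W $ (w - i + 1) $ u))"
      using earlier less.prems by (intro sum.mono_neutral_right) auto
    ultimately have "of_nat (w + 1) * W $ (w + 1) $ u = 0"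
      using f by simp
    then show ?thesis using Suc by (simp add: Suc_eq_plus1 del: of_nat_add)
  qed
qed

lemma scc_pde_unique:
  fixes f g :: "'a::field_char_0 fps" and W1 W2 :: "'a fps fps"
  assumes "scc_pde f g W1" "scc_pde f g W2" "\<And>u. u < N \<Longrightarrow> W1 $ 0 $ u = W2 $ 0 $ u"
    and "f $ 0 = 1" "g $ 0 = 0" "u < N"
  shows "W1 $ v $ u = W2 $ v $ u"
  using scc_pde_zero_init[OF scc_pde_diff[OF assms(1,2)] _ assms(4,5,6), of v] assms(3) by simp

fun transport_coeff :: "'a::field fps fps \<Rightarrow> nat \<Rightarrow> 'a fps" where
  "transport_coeff K 0 = fps_X"
| "transport_coeff K (Suc w) = fps_const (inverse (of_nat (Suc w))) *
     (\<Sum>i\<le>w. K $ i * fps_deriv (transport_coeff K (w - i)))"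

text \<open>The solution of the transport equation \<open>W\<^sub>y = K W\<^sub>x\<close> with \<open>W(x, 0) = x\<close>.\<close>

definition transport_solution :: "'a::field fps fps \<Rightarrow> 'a fps fps" where
  "transport_solution K = Abs_fps (transport_coeff K)"

lemma transport_solution_y0: "transport_solution K $ 0 = fps_X"
  by (simp add: transport_solution_def)

lemma transport_solution_eq:
  fixes K :: "'a::field_char_0 fps fps"
  shows "fps_deriv (transport_solution K) = K * deriv_x (transport_solution K)"
proof (rule fps_ext)
  fix w
  let ?W = "transport_solution K"
  have inv: "fps_const (of_nat (Suc w)) * fps_const (inverse (of_nat (Suc w))) = (1 :: 'a fps)"
    by (simp del: of_nat_Suc)
  have "fps_deriv ?W $ w = fps_const (of_nat (Suc w)) * transport_coeff K (Suc w)"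
    by (simp add: transport_solution_def fps_of_nat[symmetric] Suc_eq_plus1 del: transport_coeff.simps)
  also have "\<dots> = (\<Sum>i\<le>w. K $ i * fps_deriv (transport_coeff K (w - i)))"
    by (simp only: transport_coeff.simps mult.assoc[symmetric] inv mult_1)
  also have "\<dots> = (K * deriv_x ?W) $ w"
    by (simp add: transport_solution_def fps_mult_nth atLeast0AtMost)
  finally show "fps_deriv ?W $ w = (K * deriv_x ?W) $ w" .
qed

lemma scc_pde_transport_solution:
  fixes f g :: "'a::field_char_0 fps"
  assumes "f $ 0 \<noteq> 0"
  shows "scc_pde f g (transport_solution (fps_const g * lift_y (fps_deriv f * inverse f)))"
  unfolding scc_pde_def transport_solution_eq
  using assms by (simp add: mult.left_commute[of "lift_y f"] lift_y_mult[symmetric] mult.assoc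
      inverse_mult_eq_1)

lemma scc_pde_power:
  assumes "scc_pde f g W"
  shows "scc_pde f g (W ^ m)"
proof (cases m)
  case 0
  then show ?thesis unfolding scc_pde_def by (simp add: deriv_x_const[of 1, simplified])
next
  case (Suc k)
  have "lift_y f * fps_deriv (W ^ Suc k) = (of_nat (Suc k) * W ^ k) * (lift_y f * fps_deriv W)"
    by (simp only: fps_deriv_power' diff_Suc_1 mult_ac)
  also have "\<dots> = (of_nat (Suc k) * W ^ k) * (fps_const g * lift_y (fps_deriv f) * deriv_x W)"
    using assms unfolding scc_pde_def by simp
  also have "\<dots> = fps_const g * lift_y (fps_deriv f) * deriv_x (W ^ Suc k)"
    by (simp only: deriv_x_power mult_ac)
  finally show ?thesis using Suc unfolding scc_pde_def by simp
qed

lemma scc_pde_const_mult: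
  assumes "scc_pde f g W"
  shows "scc_pde f g (fps_const (fps_const a) * W)"
proof -
  have "lift_y f * fps_deriv (fps_const (fps_const a) * W) =
        fps_const (fps_const a) * (lift_y f * fps_deriv W)"
    by (simp add: mult_ac)
  also have "\<dots> = fps_const g * lift_y (fps_deriv f) * deriv_x (fps_const (fps_const a) * W)"
    using assms unfolding scc_pde_def by (simp add: deriv_x_mult mult_ac)
  finally show ?thesis unfolding scc_pde_def .
qed

lemma scc_pde_sum: "(\<And>m. m \<in> S \<Longrightarrow> scc_pde f g (W m)) \<Longrightarrow> scc_pde f g (\<Sum>m\<in>S. W m)"
  by (induction S rule: infinite_finite_induct)
    (auto simp: scc_pde_def algebra_simps deriv_x_const[of 0, simplified])

text \<open>\<open>g(x) W\<^sub>x\<close> is again a solution, since \<open>g(x) \<partial>\<^sub>x\<close> commutes with the operator of the PDE.\<close>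

lemma scc_pde_flow:
  assumes "scc_pde f g W"
  shows "scc_pde f g (deriv_x W * fps_const g)"
proof -
  have "lift_y f * fps_deriv (deriv_x W * fps_const g) = deriv_x (lift_y f * fps_deriv W) * fps_const g"
    by (simp add: fps_deriv_deriv_x deriv_x_mult mult_ac)
  also have "\<dots> = deriv_x (fps_const g * lift_y (fps_deriv f) * deriv_x W) * fps_const g"
    using assms unfolding scc_pde_def by simp
  also have "\<dots> = fps_const g * lift_y (fps_deriv f) * deriv_x (deriv_x W * fps_const g)"
    by (simp add: deriv_x_mult algebra_simps)
  finally show ?thesis unfolding scc_pde_def .
qed

locale degree1_scc =
  fixes n :: nat and ps :: "nat \<Rightarrow> 'a::field_char_0"
begin

abbreviation "F \<equiv> scc_f n 1 ps"
abbreviation "gF \<equiv> scc_g n 1 ps"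
abbreviation "G \<equiv> scc_G n 1 ps"

lemma scc_f_nth: "F $ k = (if k = 0 \<or> k = 1 then 1 else if k < n then ps k else 0)"
proof -
  have "(\<Sum>v\<in>{1 + 1..<n}. fps_const (ps v) * fps_X ^ v) $ k = (if 2 \<le> k \<and> k < n then ps k else 0)"
    by (simp add: fps_sum_nth mult_delta_right)
  then show ?thesis unfolding scc_f_def by auto
qed

lemma scc_f_0: "F $ 0 = 1" and scc_f_1: "F $ 1 = 1" and scc_f_deriv_0: "fps_deriv F $ 0 = 1"
  by (simp_all add: scc_f_nth fps_deriv_nth)

lemma scc_g_mult_deriv: "gF * fps_deriv F = F * (F - 1)"
  unfolding scc_g_def using scc_f_deriv_0 by (simp add: fps_divide_unit mult.assoc inverse_mult_eq_1)

lemma scc_g_0: "gF $ 0 = 0" and scc_g_1: "gF $ 1 = 1"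
proof -
  have "(gF * fps_deriv F) $ 0 = 0" "(gF * fps_deriv F) $ 1 = 1"
    unfolding scc_g_mult_deriv using scc_f_0 scc_f_1
    by (simp_all add: fps_mult_nth atLeast0AtMost sum_atMost_1)
  then show "gF $ 0 = 0" "gF $ 1 = 1"
    using scc_f_deriv_0 scc_f_1 by (simp_all add: fps_mult_nth atLeast0AtMost sum_atMost_1 One_nat_def)
qed

lemma scc_G_eq: "G = transport_solution (fps_const gF * lift_y (fps_deriv F * inverse F))"
  (is "_ = ?W")
proof -
  have W: "?W $ 0 = fps_X" "scc_pde F gF ?W"
    using scc_f_0 by (simp_all add: transport_solution_y0 scc_pde_transport_solution)
  show ?thesis
    unfolding scc_G_def
  proof (rule the_equality)
    show "?W $ 0 = fps_X \<and>
        fps_deriv ?W = fps_const gF * lift_y (fps_deriv F) * deriv_x ?W - (lift_y F - 1) * fps_deriv ?W"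
      using W unfolding scc_pde_def by (simp add: algebra_simps)
  next
    fix V assume "V $ 0 = fps_X \<and>
        fps_deriv V = fps_const gF * lift_y (fps_deriv F) * deriv_x V - (lift_y F - 1) * fps_deriv V"
    then have V: "V $ 0 = fps_X" "scc_pde F gF V"
      unfolding scc_pde_def by (auto simp: algebra_simps)
    show "V = ?W"
    proof (intro fps_ext)
      fix v u
      show "V $ v $ u = ?W $ v $ u"
        by (rule scc_pde_unique[where N = "Suc u", OF V(2) W(2) _ scc_f_0 scc_g_0])
          (simp_all add: V(1) W(1))
    qed
  qed
qed

lemma scc_G_pde: "scc_pde F gF G"
  unfolding scc_G_eq using scc_f_0 by (intro scc_pde_transport_solution) simp

lemma scc_G_y0: "G $ 0 = fps_X"
  unfolding scc_G_eq by (rule transport_solution_y0)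

lemma scc_G_x0: "G $ v $ 0 = 0"
  using scc_pde_zero_init[OF scc_G_pde _ scc_f_0 scc_g_0, of 1] scc_G_y0 by simp

lemma scc_G_y1: "G $ 1 = gF"
proof -
  have "(lift_y F * fps_deriv G) $ 0 = (fps_const gF * lift_y (fps_deriv F) * deriv_x G) $ 0"
    using scc_G_pde unfolding scc_pde_def by simp
  then show ?thesis using scc_f_0 scc_f_deriv_0 scc_G_y0 by (simp add: One_nat_def)
qed

text \<open>The series \<open>g(G)\<close> and \<open>g(x) G\<^sub>x\<close> solve the same PDE with the same value \<open>g(x)\<close> at \<open>y = 0\<close>,
  so they agree; inserting \<open>g(G) = g(x) G\<^sub>x\<close> into the PDE of \<open>G\<close> gives the cycle PDE.\<close>

lemma scc_g_comp_G:
  assumes "u < n"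
  shows "(\<Sum>k<n. gF $ k * (G ^ k) $ v $ u) = (deriv_x G * fps_const gF) $ v $ u"
proof -
  let ?A = "\<Sum>k<n. fps_const (fps_const (gF $ k)) * G ^ k"
  have "?A $ v $ u = (deriv_x G * fps_const gF) $ v $ u"
  proof (rule scc_pde_unique[OF _ _ _ scc_f_0 scc_g_0 assms])
    show "scc_pde F gF ?A"
      by (intro scc_pde_sum scc_pde_const_mult scc_pde_power scc_G_pde)
    show "scc_pde F gF (deriv_x G * fps_const gF)"
      by (rule scc_pde_flow[OF scc_G_pde])
    show "?A $ 0 $ u' = (deriv_x G * fps_const gF) $ 0 $ u'" if "u' < n" for u'
      using that by (simp add: fps_sum_nth fps_power_zeroth scc_G_y0 mult_delta_right)
  qed
  then show ?thesis by (simp add: fps_sum_nth)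
qed

lemma scc_G_identity:
  "fps_deriv G * lift_y gF + deriv_x G * fps_const gF = lift_y F * (deriv_x G * fps_const gF)"
proof -
  let ?B = "deriv_x G * fps_const gF" and ?L = "fps_deriv G * lift_y gF + deriv_x G * fps_const gF"
  have "lift_y F * ?L = (lift_y F * fps_deriv G) * lift_y gF + lift_y F * ?B"
    by (simp add: algebra_simps)
  also have "\<dots> = ?B * lift_y (gF * fps_deriv F) + lift_y F * ?B"
    using scc_G_pde unfolding scc_pde_def by (simp add: lift_y_mult mult_ac)
  also have "\<dots> = lift_y F * (lift_y F * ?B)"
    by (simp add: scc_g_mult_deriv lift_y_mult lift_y_diff algebra_simps)
  finally have e: "lift_y F * ?L = lift_y F * (lift_y F * ?B)" .
  have inv: "lift_y (inverse F) * lift_y F = 1"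
    using scc_f_0 by (simp add: lift_y_mult[symmetric] inverse_mult_eq_1)
  have "?L = lift_y (inverse F) * (lift_y F * ?L)"
    by (simp only: mult.assoc[symmetric] inv mult_1)
  also have "\<dots> = lift_y F * ?B"
    by (simp only: e mult.assoc[symmetric] inv mult_1)
  finally show ?thesis .
qed

lemma scc_G_cycle_pde: "cycle_pde n G F gF gF"
  unfolding cycle_pde_def
proof (intro allI impI)
  fix i h assume i: "i < n" and "h < n"
  define B where "B = deriv_x G * fps_const gF"
  have "(fps_deriv G * lift_y gF) $ h = (\<Sum>m=0..h. fps_deriv G $ m * fps_const (gF $ (h - m)))"
    unfolding fps_mult_nth lift_y_nth ..
  then have "(fps_deriv G * lift_y gF) $ h $ i = (\<Sum>m=0..h. of_nat (m + 1) * G $ (m + 1) $ i * gF $ (h - m))"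
    by (simp only: fps_sum_nth fps_mult_right_const_nth fps_deriv_nth fps_of_nat[symmetric]
        fps_mult_left_const_nth)
  also have "\<dots> = (fps_deriv (coeff_x G i) * gF) $ h"
    unfolding fps_mult_nth fps_deriv_nth coeff_x_nth ..
  finally have "(fps_deriv (coeff_x G i) * gF) $ h + (fps_deriv (G $ h) * gF) $ i =
      (fps_deriv G * lift_y gF + B) $ h $ i"
    by (simp add: B_def)
  also have "\<dots> = (lift_y F * B) $ h $ i"
    using scc_G_identity by (simp only: B_def)
  also have "(lift_y F * B) $ h = (\<Sum>h1=0..h. fps_const (F $ h1) * B $ (h - h1))"
    unfolding fps_mult_nth lift_y_nth ..
  then have "(lift_y F * B) $ h $ i = (\<Sum>h1\<le>h. F $ h1 * B $ (h - h1) $ i)"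
    by (simp only: fps_sum_nth fps_mult_left_const_nth atLeast0AtMost)
  also have "\<dots> = (\<Sum>h1\<le>h. F $ h1 * (\<Sum>k<n. gF $ k * (G ^ k) $ (h - h1) $ i))"
    by (simp only: B_def scc_g_comp_G[OF i])
  also have "\<dots> = (\<Sum>h1\<le>h. \<Sum>k<n. (G ^ k) $ (h - h1) $ i * F $ h1 * gF $ k)"
    by (simp add: sum_distrib_left mult_ac)
  finally show "(fps_deriv (coeff_x G i) * gF) $ h + (fps_deriv (G $ h) * gF) $ i =
      (\<Sum>h1\<le>h. \<Sum>k<n. (G ^ k) $ (h - h1) $ i * F $ h1 * gF $ k)" .
qed

lemma scc_eq_power_nth: "scc n 1 ps u v w = (G ^ w) $ v $ u"
proof (induction w arbitrary: u v)
  case 0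
  then show ?case by (simp add: scc_def)
next
  case (Suc w)
  show ?case
  proof (cases "w = 0")
    case True
    then show ?thesis by (simp add: scc_def scc1_def)
  next
    case False
    then have "scc n 1 ps u v (Suc w) = (\<Sum>u1\<le>u. \<Sum>v1\<le>v. G $ v1 $ u1 * (G ^ w) $ (v - v1) $ (u - u1))"
      using Suc.IH by (simp add: scc_def scc1_def)
    also have "\<dots> = (G ^ Suc w) $ v $ u"
      by (simp add: fps2_mult_nth sum.swap[of _ "{..u}"])
    finally show ?thesis .
  qed
qed

lemma scc_111: "scc n 1 ps 1 1 1 = 1"
  using scc_eq_power_nth[of 1 1 1] scc_G_y1 scc_g_1 by simp

end

context q_cycle_coalgebra
begin

lemma p_eq_scc_if_p111_eq_1:
  assumes "p 1 1 1 = 1" "i < n" "j < n" "k < n"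
  shows "p i j k = scc n 1 (\<lambda>v. p 1 v 1) i j k"
proof -
  let ?ps = "\<lambda>v. p 1 v 1"
  interpret S: degree1_scc n ?ps .
  have fP_eq: "fP = scc_f n 1 ?ps"
    using fP_0 assms(1) n by (intro fps_ext) (auto simp: S.scc_f_nth deg1_series_nth)
  have "fps_cutoff n (fps_deriv fP * gP) = fps_cutoff n (fps_deriv fP * scc_g n 1 ?ps)"
    unfolding fps_cutoff_eq_fps_cutoff_iff
    using P_cycle_pde_x_coeff gD_eq_gP assms(1) n S.scc_g_mult_deriv
    by (simp add: fP_eq deg1_series_nth mult.commute right_diff_distrib)
  then have "fps_cutoff n gP = fps_cutoff n (scc_g n 1 ?ps)"
    by (rule fps_cutoff_mult_cancel[rotated]) (use assms(1) n in \<open>simp add: deg1_series_nth One_nat_def\<close>)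
  then have "cycle_pde n P (scc_f n 1 ?ps) (scc_g n 1 ?ps) (scc_g n 1 ?ps)"
    using cycle_pde_cutoff_cong P_cycle_pde unfolding gD_eq_gP fP_eq by blast
  then have "P $ b $ a = scc_G n 1 ?ps $ b $ a" if "a \<le> i" "b \<le> j" for a b
    using cycle_pde_unique[OF _ S.scc_G_cycle_pde P_x0 S.scc_G_x0 P_y0 S.scc_G_y0 S.scc_g_0 _ S.scc_f_0]
      that assms
    by (simp add: S.scc_g_1)
  then have "(P ^ k) $ j $ i = (scc_G n 1 ?ps ^ k) $ j $ i"
    by (rule fps2_power_nth_local)
  then show ?thesis
    using coalg_morph_power_nth[OF coalg_p n, of k i j] assms by (simp add: S.scc_eq_power_nth)
qed

end

definition rescale :: "'a::field \<Rightarrow> 'a sconst \<Rightarrow> 'a sconst" where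
  "rescale lam m i j k = lam powi (int k - int i - int j) * m i j k"

lemma equiv_via_iff_rescale:
  "equiv_via n p d lam P D \<longleftrightarrow> lam \<noteq> 0 \<and>
     (\<forall>i<n. \<forall>j<n. \<forall>k<n. P i j k = rescale lam p i j k \<and> D i j k = rescale lam d i j k)"
  unfolding equiv_via_def rescale_def ..

lemma rescale_coalg_morph:
  assumes "lam \<noteq> 0" "coalg_morph n m"
  shows "coalg_morph n (rescale lam m)"
  unfolding coalg_morph_def
proof (intro conjI allI impI)
  fix i j assume "i < n" "j < n"
  then show "rescale lam m i j 0 = (if i = 0 \<and> j = 0 then 1 else 0)"
    using coalg_morph_counit[OF assms(2)] by (auto simp: rescale_def)
next
  fix i j k1 k2 assume ijk: "i < n" "j < n" "k1 < n" "k2 < n"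
  have "rescale lam m i1 j1 k1 * rescale lam m (i - i1) (j - j1) k2 =
        lam powi (int (k1 + k2) - int i - int j) * (m i1 j1 k1 * m (i - i1) (j - j1) k2)"
    if "i1 \<le> i" "j1 \<le> j" for i1 j1
    using that assms(1) by (simp add: rescale_def power_int_add[symmetric] of_nat_diff algebra_simps)
  then have "(\<Sum>i1\<le>i. \<Sum>j1\<le>j. rescale lam m i1 j1 k1 * rescale lam m (i - i1) (j - j1) k2) =
        lam powi (int (k1 + k2) - int i - int j) * (\<Sum>i1\<le>i. \<Sum>j1\<le>j. m i1 j1 k1 * m (i - i1) (j - j1) k2)"
    by (simp add: sum_distrib_left)
  then show "(if k1 + k2 < n then rescale lam m i j (k1 + k2) else 0) =
      (\<Sum>i1\<le>i. \<Sum>j1\<le>j. rescale lam m i1 j1 k1 * rescale lam m (i - i1) (j - j1) k2)"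
    using coalg_morph_comult[OF assms(2) ijk] by (auto simp: rescale_def)
qed

lemma ap2_rescale:
  assumes "lam \<noteq> 0"
  shows "ap2 n (rescale lam m) (\<lambda>k. lam powi (int k - a) * F k) (\<lambda>k. lam powi (int k - b) * G k) r =
         lam powi (int r - a - b) * ap2 n m F G r"
proof -
  have summand: "lam powi (int k - a) * F k * (lam powi (int k' - b) * G k') * rescale lam m k k' r =
        lam powi (int r - a - b) * (F k * G k' * m k k' r)" for k k'
  proof -
    have "(int k - a) + (int k' - b) + (int r - int k - int k') = int r - a - b"
      by simp
    then have "lam powi (int k - a) * lam powi (int k' - b) * lam powi (int r - int k - int k') =
               lam powi (int r - a - b)"
      using assms by (metis power_int_add)
    then show ?thesis
      unfolding rescale_def by (simp add: mult_ac)
  qed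
  show ?thesis
    unfolding ap2_def sum_distrib_left by (intro sum.cong refl summand)
qed

lemma mv_rescale: "mv (rescale lam m) i j = (\<lambda>k. lam powi (int k - int (i + j)) * mv m i j k)"
  by (auto simp: mv_def rescale_def algebra_simps)

lemma kd_rescale: "(\<lambda>k. kd k b) = (\<lambda>k. (lam::'a::field) powi (int k - int b) * kd k b)"
  by (auto simp: kd_def)

lemma sum_ap2_rescale_mv:
  assumes "lam \<noteq> 0" "\<And>x. x \<le> s \<Longrightarrow> a x + b x = s"
  shows "(\<Sum>x\<le>s. ap2 n (rescale lam m) (mv (rescale lam m1) i (a x)) (mv (rescale lam m2) h (b x)) r) =
         lam powi (int r - int (i + h + s)) * (\<Sum>x\<le>s. ap2 n m (mv m1 i (a x)) (mv m2 h (b x)) r)"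
  unfolding sum_distrib_left
proof (rule sum.cong[OF refl])
  fix x assume "x \<in> {..s}"
  then have "int r - int (i + a x) - int (h + b x) = int r - int (i + h + s)"
    using assms(2) by fastforce
  then show "ap2 n (rescale lam m) (mv (rescale lam m1) i (a x)) (mv (rescale lam m2) h (b x)) r =
      lam powi (int r - int (i + h + s)) * ap2 n m (mv m1 i (a x)) (mv m2 h (b x)) r"
    by (simp only: mv_rescale ap2_rescale[OF assms(1)])
qed

lemma sum_ap2_rescale_kd:
  assumes "lam \<noteq> 0" "\<And>x. x \<le> s \<Longrightarrow> a x + b x = s"
  shows "(\<Sum>x\<le>s. ap2 n (rescale lam m) (mv (rescale lam m1) i (a x)) (\<lambda>k. kd k (b x)) r) =
         lam powi (int r - int (i + s)) * (\<Sum>x\<le>s. ap2 n m (mv m1 i (a x)) (\<lambda>k. kd k (b x)) r)"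
  unfolding sum_distrib_left
proof (rule sum.cong[OF refl])
  fix x assume "x \<in> {..s}"
  then have "int r - int (i + a x) - int (b x) = int r - int (i + s)"
    using assms(2) by fastforce
  then show "ap2 n (rescale lam m) (mv (rescale lam m1) i (a x)) (\<lambda>k. kd k (b x)) r =
      lam powi (int r - int (i + s)) * ap2 n m (mv m1 i (a x)) (\<lambda>k. kd k (b x)) r"
    by (subst (1) kd_rescale[of _ lam]) (simp only: mv_rescale ap2_rescale[OF assms(1)])
qed

lemma rescale_magma_divisions:
  assumes "lam \<noteq> 0" "magma_divisions n p d u l"
  shows "magma_divisions n (rescale lam p) (rescale lam d) (rescale lam u) (rescale lam l)"
  using assms(2) unfolding magma_divisions_def
  by (simp add: sum_ap2_rescale_kd[OF assms(1)]) (auto simp: kd_def)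

lemma rescale_regular_q_cycle:
  assumes "lam \<noteq> 0" "regular_q_cycle n p d"
  shows "regular_q_cycle n (rescale lam p) (rescale lam d)"
proof -
  have "regular_q_magma n (rescale lam p) (rescale lam d)"
    using assms unfolding regular_q_cycle_def regular_q_magma_iff
    by (auto intro: rescale_coalg_morph rescale_magma_divisions)
  then show ?thesis
    using assms unfolding regular_q_cycle_def
    by (simp add: sum_ap2_rescale_mv[OF assms(1)] add_ac)
qed

lemma rescale_111: "lam \<noteq> 0 \<Longrightarrow> rescale lam p 1 1 1 = inverse lam * p 1 1 1"
  by (simp add: rescale_def power_int_minus)

lemma (in q_cycle_coalgebra) equiv_via_scc:
  defines "ps \<equiv> \<lambda>v. rescale (p 1 1 1) p 1 v 1"
  shows "equiv_via n p d (p 1 1 1) (scc n 1 ps) (scc n 1 ps)"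
proof -
  interpret normalized: q_cycle_coalgebra n "rescale (p 1 1 1) p" "rescale (p 1 1 1) d"
    using n rescale_regular_q_cycle[OF p111 cycle] p111 by unfold_locales (simp_all add: rescale_111)
  have "rescale (p 1 1 1) p 1 1 1 = 1"
    using p111 by (simp add: rescale_111)
  then show ?thesis
    unfolding equiv_via_iff_rescale ps_def
    using p111 normalized.p_eq_scc_if_p111_eq_1 normalized.d_eq_p by simp
qed

lemma equiv_via_scc_imp_eq_p111:
  fixes p d :: "'a::field_char_0 sconst"
  assumes "2 \<le> n" "equiv_via n p d lam (scc n 1 ps) (scc n 1 ps)"
  shows "lam = p 1 1 1"
proof -
  have "lam \<noteq> 0" "scc n 1 ps 1 1 1 = rescale lam p 1 1 1"
    using assms unfolding equiv_via_iff_rescale by auto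
  then have "inverse lam * p 1 1 1 = 1"
    by (simp add: degree1_scc.scc_111 rescale_111)
  then show ?thesis
    using \<open>lam \<noteq> 0\<close> by (simp add: field_simps)
qed

theorem corollary4p6:
  fixes n :: nat and p d :: "nat \<Rightarrow> nat \<Rightarrow> nat \<Rightarrow> 'a::{alg_closed_field, field_char_0}"
  assumes "n \<ge> 2"
    and "regular_q_cycle n p d"
    and "p 1 1 1 \<noteq> 0"
  shows "(\<exists>ps lam. equiv_via n p d lam (scc n 1 ps) (scc n 1 ps)) \<and>
         (\<forall>ps1 ps2 lam1 lam2.
            equiv_via n p d lam1 (scc n 1 ps1) (scc n 1 ps1) \<longrightarrow>
            equiv_via n p d lam2 (scc n 1 ps2) (scc n 1 ps2) \<longrightarrow>
            (\<forall>u<n. \<forall>v<n. \<forall>w<n. scc n 1 ps1 u v w = scc n 1 ps2 u v w))"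
proof (intro conjI allI impI)
  interpret q_cycle_coalgebra n p d
    using assms by unfold_locales
  show "\<exists>ps lam. equiv_via n p d lam (scc n 1 ps) (scc n 1 ps)"
    using equiv_via_scc by blast
next
  fix ps1 ps2 lam1 lam2 u v w
  assume equiv: "equiv_via n p d lam1 (scc n 1 ps1) (scc n 1 ps1)"
    "equiv_via n p d lam2 (scc n 1 ps2) (scc n 1 ps2)" and "u < n" "v < n" "w < n"
  then have "lam1 = lam2"
    using equiv_via_scc_imp_eq_p111[OF assms(1)] by metis
  then show "scc n 1 ps1 u v w = scc n 1 ps2 u v w"
    using equiv \<open>u < n\<close> \<open>v < n\<close> \<open>w < n\<close> unfolding equiv_via_iff_rescale by simp
qed

end
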